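(* Let $\delta\in(0,1)$ and $\iota=2\log(4(m+1)F/\delta)$. Suppose there is a Nash equilibrium $\pi^*$ satisfying the one-unit deviation assumption with respect to $\rho$, and let $C_{\mathrm{facility}}$ be the facility unilateral coefficient of $\pi^*$. Let $\pi^{\mathrm{out}}$ be the output of the surrogate-minimization procedure run with the facility-level estimator $\hat r$ and bonus $b$ defined in the context. Then, with probability at least $1-\delta$, $$\mathrm{Gap}(\pi^{\mathrm{out}})\le \frac{8\sqrt{m+1}\,C_{\mathrm{facility}}\,\iota\, F}{\sqrt n}.$$
   Context: Congestion game setting. There are $m\ge 1$ players and a finite facility set $\mathcal F$ with $F=|\mathcal F|$. Each player $i\in[m]$ has a nonempty finite action set $\mathcal A_i\subseteq 2^{\mathcal F}$; $\mathcal A=\prod_i\mathcal A_i$. For $f\in\mathcal F$ let $n^f(\bm a)=|\{i: f\in a_i\}|$. For each $f$ and $\ell\in\{1,\dots,m\}$ there is a reward distribution $R^f(\cdot\mid \ell)$ supported in $[-1,1]$ with mean $r^f(\ell)$; player $i$'s mean reward is $r_i(\bm a)=\sum_{f\in a_i} r^f(n^f(\bm a))$. A product policy is $\pi=\otimes_i\pi_i$ with $\pi_i\in\Delta(\mathcal A_i)$; $(\pi_i',\pi_{-i})$ replaces the $i$-th component. $V_i^\pi=\mathbb E_{\bm a\sim\pi}[r_i(\bm a)]$, $\mathrm{Gap}(\pi)=\max_i\big[\max_{\pi_i'}V_i^{(\pi_i',\pi_{-i})}-V_i^{\pi}\big]$, and a Nash equilibrium is a product policy with $\mathrm{Gap}=0$.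 Facility-level offline data: $\mathcal D=\{(\bm a^k,\bm r^k)\}_{k=1}^n$ where $\bm a^1,\dots,\bm a^n$ are i.i.d. from $\rho\in\Delta(\mathcal A)$, and, given the joint actions, for each $k$ and each facility $f$ with $n^f(\bm a^k)\ge1$ a reward $r^{f,k}\sim R^f(\cdot\mid n^f(\bm a^k))$ is drawn, all draws independent; $\bm r^k=\{r^{f,k}\}_{f:\,n^f(\bm a^k)\ge1}$. Estimator and bonus: for $f\in\mathcal F$ and $\ell\in\{0,\dots,m\}$ let $N^f(\ell)=|\{k: n^f(\bm a^k)=\ell\}|$. Define $\hat r_i(\bm a)=\sum_{f\in a_i}\frac{\sum_{k=1}^n r^{f,k}\,\mathbb 1\{n^f(\bm a^k)=n^f(\bm a)\}}{N^f(n^f(\bm a))\vee 1}$ and $b_i(\bm a)=\sum_{f\in a_i}\sqrt{\frac{\iota}{N^f(n^f(\bm a))\vee1}}$. Surrogate minimization: $\overline V_i^{\pi}=\mathbb E_{\bm a\sim\pi}[\hat r_i+b_i]$, $\underline V_i^{\pi}=\mathbb E_{\bm a\sim\pi}[\hat r_i-b_i]$, $\overline V_i^{\dagger,\pi_{-i}}=\max_{\pi_i'}\overline V_i^{(\pi_i',\pi_{-i})}$, and $\pi^{\mathrm{out}}\in\arg\min_{\pi\text{ product}}\max_i[\overline V_i^{\dagger,\pi_{-i}}-\underline V_i^{\pi}]$. Facility cumulative density: for a distribution $\pi$ on $\mathcal A$, $d^\pi_f(\ell)=\sum_{\bm a:\,n^f(\bm a)=\ell}\pi(\bm a)$. One-unit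 deviation assumption: for every $i\in[m]$, every $\pi_i\in\Delta(\mathcal A_i)$, every $f\in\mathcal F$ and $\ell\in\{0,\dots,m\}$, if $d^{(\pi_i,\pi^*_{-i})}_f(\ell)>0$ then $d^\rho_f(\ell)>0$. Facility unilateral coefficient: $C_{\mathrm{facility}}=\max\big\{ d^{(\pi_i',\pi^*_{-i})}_f(\ell)/d^\rho_f(\ell):\ i\in[m],\ \pi_i'\in\Delta(\mathcal A_i),\ f\in\mathcal F,\ \ell\in\{0,\dots,m\},\ d^\rho_f(\ell)>0\big\}$. *)

theory Defs
  imports "HOL-Probability.Probability"
begin

text \<open>Players are 0..<m, facilities are the elements of a finite type 'f (so F = CARD('f)).
  A joint action is a function nat => 'f set (meaningful on {..<m}, undefined elsewhere).\<close>

definition nf :: "nat \<Rightarrow> 'f \<Rightarrow> (nat \<Rightarrow> 'f set) \<Rightarrow> nat" where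
  "nf m f a = card {i \<in> {..<m}. f \<in> a i}"

definition prod_pol :: "nat \<Rightarrow> (nat \<Rightarrow> 'f set pmf) \<Rightarrow> (nat \<Rightarrow> 'f set) pmf" where
  "prod_pol m \<pi> = Pi_pmf {..<m} undefined \<pi>"

definition is_prod_policy :: "nat \<Rightarrow> (nat \<Rightarrow> 'f set set) \<Rightarrow> (nat \<Rightarrow> 'f set pmf) \<Rightarrow> bool" where
  "is_prod_policy m A \<pi> \<longleftrightarrow> (\<forall>i<m. set_pmf (\<pi> i) \<subseteq> A i)"

definition mean_rew :: "('f \<Rightarrow> nat \<Rightarrow> real measure) \<Rightarrow> 'f \<Rightarrow> nat \<Rightarrow> real" where
  "mean_rew R f l = integral\<^sup>L (R f l) (\<lambda>x. x)"

definition player_rew :: "nat \<Rightarrow> ('f \<Rightarrow> nat \<Rightarrow> real measure) \<Rightarrow> nat \<Rightarrow> (nat \<Rightarrow> 'f set) \<Rightarrow> real" where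
  "player_rew m R i a = (\<Sum>f\<in>a i. mean_rew R f (nf m f a))"

definition Val :: "nat \<Rightarrow> ('f \<Rightarrow> nat \<Rightarrow> real measure) \<Rightarrow> nat \<Rightarrow> (nat \<Rightarrow> 'f set pmf) \<Rightarrow> real" where
  "Val m R i \<pi> = measure_pmf.expectation (prod_pol m \<pi>) (player_rew m R i)"

definition best_resp :: "nat \<Rightarrow> (nat \<Rightarrow> 'f set set) \<Rightarrow> ('f \<Rightarrow> nat \<Rightarrow> real measure) \<Rightarrow> nat
    \<Rightarrow> (nat \<Rightarrow> 'f set pmf) \<Rightarrow> real" where
  "best_resp m A R i \<pi> = (SUP p\<in>{p. set_pmf p \<subseteq> A i}. Val m R i (\<pi>(i := p)))"

definition Gap :: "nat \<Rightarrow> (nat \<Rightarrow> 'f set set) \<Rightarrow> ('f \<Rightarrow> nat \<Rightarrow> real measure)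
    \<Rightarrow> (nat \<Rightarrow> 'f set pmf) \<Rightarrow> real" where
  "Gap m A R \<pi> = Max ((\<lambda>i. best_resp m A R i \<pi> - Val m R i \<pi>) ` {..<m})"

definition is_NE :: "nat \<Rightarrow> (nat \<Rightarrow> 'f set set) \<Rightarrow> ('f \<Rightarrow> nat \<Rightarrow> real measure)
    \<Rightarrow> (nat \<Rightarrow> 'f set pmf) \<Rightarrow> bool" where
  "is_NE m A R \<pi> \<longleftrightarrow> is_prod_policy m A \<pi> \<and> Gap m A R \<pi> = 0"

definition dens :: "nat \<Rightarrow> (nat \<Rightarrow> 'f set) pmf \<Rightarrow> 'f \<Rightarrow> nat \<Rightarrow> real" where
  "dens m p f l = measure_pmf.prob p {a. nf m f a = l}"

definition one_unit_dev :: "nat \<Rightarrow> (nat \<Rightarrow> 'f set set) \<Rightarrow> (nat \<Rightarrow> 'f set) pmf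
    \<Rightarrow> (nat \<Rightarrow> 'f set pmf) \<Rightarrow> bool" where
  "one_unit_dev m A \<rho> \<pi>s \<longleftrightarrow>
     (\<forall>i<m. \<forall>p. set_pmf p \<subseteq> A i \<longrightarrow> (\<forall>f l. l \<le> m \<longrightarrow>
        dens m (prod_pol m (\<pi>s(i := p))) f l > 0 \<longrightarrow> dens m \<rho> f l > 0))"

definition C_facility :: "nat \<Rightarrow> (nat \<Rightarrow> 'f set set) \<Rightarrow> (nat \<Rightarrow> 'f set) pmf
    \<Rightarrow> (nat \<Rightarrow> 'f set pmf) \<Rightarrow> real" where
  "C_facility m A \<rho> \<pi>s = Sup {dens m (prod_pol m (\<pi>s(i := p))) f l / dens m \<rho> f l | i p f l.
       i < m \<and> set_pmf p \<subseteq> A i \<and> l \<le> m \<and> dens m \<rho> f l > 0}"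

text \<open>Data. A sample is (joint action, facility rewards); the reward of a facility not used
  in the sample is an (unread) dummy value 0. A dataset is D :: nat => sample, used on {..<n}.\<close>

definition sample_meas :: "nat \<Rightarrow> ('f \<Rightarrow> nat \<Rightarrow> real measure) \<Rightarrow> (nat \<Rightarrow> 'f set) pmf
    \<Rightarrow> ((nat \<Rightarrow> 'f set) \<times> ('f \<Rightarrow> real)) measure" where
  "sample_meas m R \<rho> = measure_pmf \<rho> \<bind> (\<lambda>a.
      distr (PiM UNIV (\<lambda>f. if nf m f a \<ge> 1 then R f (nf m f a) else return borel 0))
            (count_space UNIV \<Otimes>\<^sub>M PiM UNIV (\<lambda>_. borel)) (\<lambda>r. (a, r)))"

definition data_meas :: "nat \<Rightarrow> nat \<Rightarrow> ('f \<Rightarrow> nat \<Rightarrow> real measure) \<Rightarrow> (nat \<Rightarrow> 'f set) pmf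
    \<Rightarrow> (nat \<Rightarrow> (nat \<Rightarrow> 'f set) \<times> ('f \<Rightarrow> real)) measure" where
  "data_meas m n R \<rho> = PiM {..<n} (\<lambda>_. sample_meas m R \<rho>)"

definition Ncnt :: "nat \<Rightarrow> nat \<Rightarrow> (nat \<Rightarrow> (nat \<Rightarrow> 'f set) \<times> ('f \<Rightarrow> real)) \<Rightarrow> 'f \<Rightarrow> nat \<Rightarrow> nat" where
  "Ncnt m n D f l = card {k \<in> {..<n}. nf m f (fst (D k)) = l}"

definition rhat :: "nat \<Rightarrow> nat \<Rightarrow> (nat \<Rightarrow> (nat \<Rightarrow> 'f set) \<times> ('f \<Rightarrow> real)) \<Rightarrow> nat
    \<Rightarrow> (nat \<Rightarrow> 'f set) \<Rightarrow> real" where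
  "rhat m n D i a = (\<Sum>f\<in>a i.
      (\<Sum>k<n. snd (D k) f * (if nf m f (fst (D k)) = nf m f a then 1 else 0))
        / real (max (Ncnt m n D f (nf m f a)) 1))"

definition bonus :: "nat \<Rightarrow> nat \<Rightarrow> real \<Rightarrow> (nat \<Rightarrow> (nat \<Rightarrow> 'f set) \<times> ('f \<Rightarrow> real)) \<Rightarrow> nat
    \<Rightarrow> (nat \<Rightarrow> 'f set) \<Rightarrow> real" where
  "bonus m n \<iota> D i a = (\<Sum>f\<in>a i. sqrt (\<iota> / real (max (Ncnt m n D f (nf m f a)) 1)))"

definition Vup :: "nat \<Rightarrow> nat \<Rightarrow> real \<Rightarrow> (nat \<Rightarrow> (nat \<Rightarrow> 'f set) \<times> ('f \<Rightarrow> real)) \<Rightarrow> nat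
    \<Rightarrow> (nat \<Rightarrow> 'f set pmf) \<Rightarrow> real" where
  "Vup m n \<iota> D i \<pi> = measure_pmf.expectation (prod_pol m \<pi>) (\<lambda>a. rhat m n D i a + bonus m n \<iota> D i a)"

definition Vlo :: "nat \<Rightarrow> nat \<Rightarrow> real \<Rightarrow> (nat \<Rightarrow> (nat \<Rightarrow> 'f set) \<times> ('f \<Rightarrow> real)) \<Rightarrow> nat
    \<Rightarrow> (nat \<Rightarrow> 'f set pmf) \<Rightarrow> real" where
  "Vlo m n \<iota> D i \<pi> = measure_pmf.expectation (prod_pol m \<pi>) (\<lambda>a. rhat m n D i a - bonus m n \<iota> D i a)"

definition Vup_dag :: "nat \<Rightarrow> (nat \<Rightarrow> 'f set set) \<Rightarrow> nat \<Rightarrow> real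
    \<Rightarrow> (nat \<Rightarrow> (nat \<Rightarrow> 'f set) \<times> ('f \<Rightarrow> real)) \<Rightarrow> nat \<Rightarrow> (nat \<Rightarrow> 'f set pmf) \<Rightarrow> real" where
  "Vup_dag m A n \<iota> D i \<pi> = (SUP p\<in>{p. set_pmf p \<subseteq> A i}. Vup m n \<iota> D i (\<pi>(i := p)))"

definition surrogate :: "nat \<Rightarrow> (nat \<Rightarrow> 'f set set) \<Rightarrow> nat \<Rightarrow> real
    \<Rightarrow> (nat \<Rightarrow> (nat \<Rightarrow> 'f set) \<times> ('f \<Rightarrow> real)) \<Rightarrow> (nat \<Rightarrow> 'f set pmf) \<Rightarrow> real" where
  "surrogate m A n \<iota> D \<pi> = Max ((\<lambda>i. Vup_dag m A n \<iota> D i \<pi> - Vlo m n \<iota> D i \<pi>) ` {..<m})"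

definition is_output :: "nat \<Rightarrow> (nat \<Rightarrow> 'f set set) \<Rightarrow> nat \<Rightarrow> real
    \<Rightarrow> (nat \<Rightarrow> (nat \<Rightarrow> 'f set) \<times> ('f \<Rightarrow> real)) \<Rightarrow> (nat \<Rightarrow> 'f set pmf) \<Rightarrow> bool" where
  "is_output m A n \<iota> D \<pi> \<longleftrightarrow> is_prod_policy m A \<pi> \<and>
     (\<forall>\<pi>'. is_prod_policy m A \<pi>' \<longrightarrow> surrogate m A n \<iota> D \<pi> \<le> surrogate m A n \<iota> D \<pi>')"

end

theory Submission
  imports Defs
begin

text \<open>For each facility f and load l, Hoeffding's inequality (conditionally on the joint actions)
  keeps the empirical mean within sqrt (\<iota> / N_f(l)) of r_f(l), and a Chernoff bound keeps
  N_f(l) \<ge> n d_f(l) / (4 \<iota>), where d_f is the load density under \<rho>; with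
  \<iota> = 2 log (4 (m + 1) F / \<delta>) a union bound over the F m pairs leaves probability at least 1 - \<delta>.
  On this event the optimistic and pessimistic values bracket the true ones, so
  Gap \<pi>_out \<le> surrogate \<pi>_out \<le> surrogate \<pi>*, which is at most four times the largest expected
  bonus under a unilateral deviation from \<pi>*. By the one-unit deviation assumption that expectation
  is at most \<Sum>_f \<Sum>_l C d_f(l) 2 \<iota> / sqrt (n d_f(l)), and Cauchy-Schwarz over the m loads gives
  \<Sum>_l sqrt (d_f(l)) \<le> sqrt (m + 1).\<close>

section \<open>Facility-level estimator and bonus\<close>

definition bounded_rewards :: "nat \<Rightarrow> ('f \<Rightarrow> nat \<Rightarrow> real measure) \<Rightarrow> bool" where
  "bounded_rewards m R \<longleftrightarrow> (\<forall>f l. 1 \<le> l \<and> l \<le> m \<longrightarrow> prob_space (R f l) \<and> sets (R f l) = sets borel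
      \<and> (AE x in R f l. -1 \<le> x \<and> x \<le> 1))"

definition facility_est :: "nat \<Rightarrow> nat \<Rightarrow> (nat \<Rightarrow> (nat \<Rightarrow> 'f set) \<times> ('f \<Rightarrow> real)) \<Rightarrow> 'f \<Rightarrow> nat \<Rightarrow> real" where
  "facility_est m n D f l = (\<Sum>k<n. snd (D k) f * (if nf m f (fst (D k)) = l then 1 else 0))
        / real (max (Ncnt m n D f l) 1)"

definition facility_bonus :: "nat \<Rightarrow> nat \<Rightarrow> real \<Rightarrow> (nat \<Rightarrow> (nat \<Rightarrow> 'f set) \<times> ('f \<Rightarrow> real)) \<Rightarrow> 'f \<Rightarrow> nat \<Rightarrow> real" where
  "facility_bonus m n \<iota> D f l = sqrt (\<iota> / real (max (Ncnt m n D f l) 1))"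

definition good_data :: "nat \<Rightarrow> nat \<Rightarrow> real \<Rightarrow> ('f \<Rightarrow> nat \<Rightarrow> real measure) \<Rightarrow> (nat \<Rightarrow> 'f set) pmf
    \<Rightarrow> (nat \<Rightarrow> (nat \<Rightarrow> 'f set) \<times> ('f \<Rightarrow> real)) \<Rightarrow> bool" where
  "good_data m n \<iota> R \<rho> D \<longleftrightarrow>
     (\<forall>f l. 1 \<le> l \<longrightarrow> l \<le> m \<longrightarrow>
        \<bar>facility_est m n D f l - mean_rew R f l\<bar> \<le> facility_bonus m n \<iota> D f l) \<and>
     (\<forall>f l. 1 \<le> l \<longrightarrow> l \<le> m \<longrightarrow> 0 < dens m \<rho> f l \<longrightarrow>
        real n * dens m \<rho> f l \<le> 4 * \<iota> * real (max (Ncnt m n D f l) 1))"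

lemma rhat_eq_sum_facility_est: "rhat m n D i a = (\<Sum>f\<in>a i. facility_est m n D f (nf m f a))"
  by (simp add: rhat_def facility_est_def)

lemma bonus_eq_sum_facility_bonus: "bonus m n \<iota> D i a = (\<Sum>f\<in>a i. facility_bonus m n \<iota> D f (nf m f a))"
  by (simp add: bonus_def facility_bonus_def)

lemma nf_le: "nf m f a \<le> m"
  unfolding nf_def by (rule order_trans[OF card_mono[of "{..<m}"]]) auto

lemma one_le_nf: "i < m \<Longrightarrow> f \<in> a i \<Longrightarrow> 1 \<le> nf m f a"
proof -
  assume "i < m" "f \<in> a i"
  hence "card {i \<in> {..<m}. f \<in> a i} > 0" by (subst card_gt_0_iff) auto
  thus ?thesis unfolding nf_def by simp
qed

lemma facility_bonus_nonneg: "0 \<le> \<iota> \<Longrightarrow> 0 \<le> facility_bonus m n \<iota> D f l"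
  by (simp add: facility_bonus_def)

lemma facility_bonus_le_sqrt: "0 \<le> \<iota> \<Longrightarrow> facility_bonus m n \<iota> D f l \<le> sqrt \<iota>"
proof -
  assume "0 \<le> \<iota>"
  hence "\<iota> / real (max (Ncnt m n D f l) 1) \<le> \<iota> / 1"
    by (intro divide_left_mono) auto
  thus ?thesis unfolding facility_bonus_def by (intro real_sqrt_le_mono) simp
qed

lemma abs_facility_est_le: "\<bar>facility_est m n D f l\<bar> \<le> (\<Sum>k<n. \<bar>snd (D k) f\<bar>)"
proof -
  let ?S = "\<Sum>k<n. snd (D k) f * (if nf m f (fst (D k)) = l then 1 else 0)"
  have "\<bar>facility_est m n D f l\<bar> = \<bar>?S\<bar> / real (max (Ncnt m n D f l) 1)"
    by (simp add: facility_est_def abs_divide)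
  also have "\<dots> \<le> \<bar>?S\<bar> / 1"
    by (intro divide_left_mono) auto
  also have "\<dots> \<le> (\<Sum>k<n. \<bar>snd (D k) f\<bar>)"
    by (simp, rule order_trans[OF sum_abs]) (intro sum_mono, auto)
  finally show ?thesis .
qed

lemma abs_rhat_le: "\<bar>rhat m n D i (a :: nat \<Rightarrow> 'f::finite set)\<bar> \<le> (\<Sum>f\<in>UNIV. \<Sum>k<n. \<bar>snd (D k) f\<bar>)"
proof -
  have "\<bar>rhat m n D i a\<bar> \<le> (\<Sum>f\<in>a i. \<bar>facility_est m n D f (nf m f a)\<bar>)"
    unfolding rhat_eq_sum_facility_est by (rule sum_abs)
  also have "\<dots> \<le> (\<Sum>f\<in>a i. \<Sum>k<n. \<bar>snd (D k) f\<bar>)"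
    by (intro sum_mono abs_facility_est_le)
  also have "\<dots> \<le> (\<Sum>f\<in>UNIV. \<Sum>k<n. \<bar>snd (D k) f\<bar>)"
    by (intro sum_mono2) (auto intro: sum_nonneg)
  finally show ?thesis .
qed

lemma bonus_nonneg: "0 \<le> \<iota> \<Longrightarrow> 0 \<le> bonus m n \<iota> D i a"
  unfolding bonus_eq_sum_facility_bonus by (intro sum_nonneg facility_bonus_nonneg)

lemma bonus_le: "0 \<le> \<iota> \<Longrightarrow> bonus m n \<iota> D i (a :: nat \<Rightarrow> 'f::finite set) \<le> real CARD('f) * sqrt \<iota>"
proof -
  assume \<iota>: "0 \<le> \<iota>"
  have "bonus m n \<iota> D i a \<le> (\<Sum>f\<in>a i. sqrt \<iota>)"
    unfolding bonus_eq_sum_facility_bonus by (intro sum_mono facility_bonus_le_sqrt \<iota>)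
  also have "\<dots> = real (card (a i)) * sqrt \<iota>" by simp
  also have "\<dots> \<le> real CARD('f) * sqrt \<iota>"
    using \<iota> by (intro mult_right_mono) (simp_all add: card_mono)
  finally show ?thesis .
qed

lemma integrable_measure_pmf_bounded: "(\<And>x. \<bar>h x\<bar> \<le> B) \<Longrightarrow> integrable (measure_pmf p) (h :: _ \<Rightarrow> real)"
  by (intro measure_pmf.integrable_const_bound[where B=B]) auto

lemma abs_integral_le_1:
  assumes "prob_space M" "sets M = sets borel" "AE x in M. -1 \<le> x \<and> x \<le> 1"
  shows "\<bar>integral\<^sup>L M (\<lambda>x. x :: real)\<bar> \<le> 1"
proof -
  interpret prob_space M by (rule assms(1))
  have "(\<lambda>x. x) \<in> borel_measurable M"
    by (subst measurable_cong_sets[OF assms(2) refl]) simp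
  hence int: "integrable M (\<lambda>x. x)"
    by (intro integrable_const_bound[where B=1]) (use assms(3) in auto)
  have "integral\<^sup>L M (\<lambda>x. x) \<le> 1"
    by (rule integral_le_const[OF int]) (use assms(3) in auto)
  moreover have "-1 \<le> integral\<^sup>L M (\<lambda>x. x)"
    by (rule integral_ge_const[OF int]) (use assms(3) in auto)
  ultimately show ?thesis by auto
qed

lemma abs_mean_rew_le_1: "bounded_rewards m R \<Longrightarrow> 1 \<le> l \<Longrightarrow> l \<le> m \<Longrightarrow> \<bar>mean_rew R f l\<bar> \<le> 1"
  unfolding mean_rew_def bounded_rewards_def by (intro abs_integral_le_1) auto

lemma abs_player_rew_le:
  assumes "bounded_rewards m R" "i < m"
  shows "\<bar>player_rew m R i (a :: nat \<Rightarrow> 'f::finite set)\<bar> \<le> real CARD('f)"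
proof -
  have "\<bar>player_rew m R i a\<bar> \<le> (\<Sum>f\<in>a i. \<bar>mean_rew R f (nf m f a)\<bar>)"
    unfolding player_rew_def by (rule sum_abs)
  also have "\<dots> \<le> (\<Sum>f\<in>a i. 1)"
    by (intro sum_mono abs_mean_rew_le_1[OF assms(1)] one_le_nf[OF assms(2)] nf_le)
  also have "\<dots> \<le> real CARD('f)" by (simp add: card_mono)
  finally show ?thesis .
qed

lemma integrable_player_rew:
  "bounded_rewards m R \<Longrightarrow> i < m \<Longrightarrow> integrable (measure_pmf p) (player_rew m R i :: (nat \<Rightarrow> 'f::finite set) \<Rightarrow> real)"
  by (rule integrable_measure_pmf_bounded[OF abs_player_rew_le])

lemma integrable_rhat: "integrable (measure_pmf p) (rhat m n D i :: (nat \<Rightarrow> 'f::finite set) \<Rightarrow> real)"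
  by (rule integrable_measure_pmf_bounded[OF abs_rhat_le])

lemma integrable_bonus: "0 \<le> \<iota> \<Longrightarrow> integrable (measure_pmf p) (bonus m n \<iota> D i :: (nat \<Rightarrow> 'f::finite set) \<Rightarrow> real)"
  by (rule integrable_measure_pmf_bounded[where B="real CARD('f) * sqrt \<iota>"])
     (simp add: bonus_nonneg bonus_le)

lemma dens_nonneg: "0 \<le> dens m P f l"
  by (simp add: dens_def)

lemma dens_le_1: "dens m P f l \<le> 1"
  by (simp add: dens_def)

lemma sum_dens_le_1: "(\<Sum>l\<in>L. dens m P f l) \<le> 1"
proof -
  have "(\<Sum>l\<in>L. dens m P f l) = measure_pmf.prob P (\<Union>l\<in>L. {a. nf m f a = l})" if "finite L"
    unfolding dens_def using that
    by (intro measure_pmf.finite_measure_finite_Union[symmetric]) (auto simp: disjoint_family_on_def)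
  thus ?thesis by (cases "finite L") auto
qed

lemma sum_sqrt_dens_le: "(\<Sum>l\<in>{1..m}. sqrt (dens m P f l)) \<le> sqrt (real m + 1)"
proof (rule real_le_rsqrt)
  have "(\<Sum>l\<in>{1..m}. sqrt (dens m P f l) * 1)\<^sup>2 \<le> (\<Sum>l\<in>{1..m}. (sqrt (dens m P f l))\<^sup>2) * (\<Sum>l\<in>{1..m}. 1\<^sup>2)"
    by (rule Cauchy_Schwarz_ineq_sum)
  also have "\<dots> = (\<Sum>l\<in>{1..m}. dens m P f l) * real m" by (simp add: dens_nonneg)
  also have "\<dots> \<le> real m" using sum_dens_le_1[of m P f "{1..m}"]
    by (intro mult_left_le_one_le) (auto intro: sum_nonneg dens_nonneg)
  finally show "(\<Sum>l\<in>{1..m}. sqrt (dens m P f l))\<^sup>2 \<le> real m + 1" by simp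
qed

lemma expected_bonus_le_sum_dens:
  assumes "i < m" "0 \<le> \<iota>"
  shows "measure_pmf.expectation P (bonus m n \<iota> D i :: (nat \<Rightarrow> 'f::finite set) \<Rightarrow> real)
    \<le> (\<Sum>f\<in>UNIV. \<Sum>l\<in>{1..m}. dens m P f l * facility_bonus m n \<iota> D f l)"
proof -
  let ?h = "\<lambda>f l a. indicator {a. nf m f a = l} a * facility_bonus m n \<iota> D f l"
  have int: "integrable (measure_pmf P) (?h f l)" for f l
    by (rule integrable_measure_pmf_bounded[where B="\<bar>facility_bonus m n \<iota> D f l\<bar>"])
       (simp add: indicator_def abs_mult)
  have pointwise: "bonus m n \<iota> D i a \<le> (\<Sum>f\<in>UNIV. \<Sum>l\<in>{1..m}. ?h f l a)" for a
  proof -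
    have level: "(\<Sum>l\<in>{1..m}. ?h f l a) = facility_bonus m n \<iota> D f (nf m f a)" if "f \<in> a i" for f
      using one_le_nf[of i m f a, OF assms(1) that] nf_le[of m f a]
      by (simp add: indicator_def sum.delta[where a="nf m f a"] if_distrib cong: if_cong)
    have "bonus m n \<iota> D i a = (\<Sum>f\<in>a i. \<Sum>l\<in>{1..m}. ?h f l a)"
      unfolding bonus_eq_sum_facility_bonus by (intro sum.cong refl level[symmetric])
    also have "\<dots> \<le> (\<Sum>f\<in>UNIV. \<Sum>l\<in>{1..m}. ?h f l a)"
      using assms(2) by (intro sum_mono2) (auto intro!: sum_nonneg facility_bonus_nonneg)
    finally show ?thesis .
  qed
  have "measure_pmf.expectation P (bonus m n \<iota> D i)
      \<le> measure_pmf.expectation P (\<lambda>a. \<Sum>f\<in>UNIV. \<Sum>l\<in>{1..m}. ?h f l a)"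
    by (intro integral_mono integrable_bonus assms(2) pointwise Bochner_Integration.integrable_sum int)
  also have "\<dots> = (\<Sum>f\<in>UNIV. measure_pmf.expectation P (\<lambda>a. \<Sum>l\<in>{1..m}. ?h f l a))"
    by (intro Bochner_Integration.integral_sum Bochner_Integration.integrable_sum int)
  also have "\<dots> = (\<Sum>f\<in>UNIV. \<Sum>l\<in>{1..m}. measure_pmf.expectation P (?h f l))"
    by (intro sum.cong refl Bochner_Integration.integral_sum int)
  also have "\<dots> = (\<Sum>f\<in>UNIV. \<Sum>l\<in>{1..m}. dens m P f l * facility_bonus m n \<iota> D f l)"
    by (simp add: dens_def)
  finally show ?thesis .
qed

lemma bdd_above_C_facility_ratios:
  "bdd_above {dens m (prod_pol m (\<pi>s(i := p))) f l / dens m \<rho> f l | i p f l.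
     i < m \<and> set_pmf p \<subseteq> A i \<and> l \<le> m \<and> dens m \<rho> (f :: 'f::finite) l > 0}"
proof (rule bdd_aboveI)
  let ?B = "\<Sum>f\<in>UNIV. \<Sum>l\<in>{..m}. (if dens m \<rho> f l > 0 then 1 / dens m \<rho> f l else 0)"
  fix x assume "x \<in> {dens m (prod_pol m (\<pi>s(i := p))) f l / dens m \<rho> f l | i p f l.
     i < m \<and> set_pmf p \<subseteq> A i \<and> l \<le> m \<and> dens m \<rho> (f :: 'f) l > 0}"
  then obtain i p f l where x: "x = dens m (prod_pol m (\<pi>s(i := p))) f l / dens m \<rho> f l"
    and l: "l \<le> m" and d: "dens m \<rho> f l > 0" by blast
  have "x \<le> 1 / dens m \<rho> f l" unfolding x using d by (intro divide_right_mono dens_le_1) auto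
  also have "\<dots> = (if dens m \<rho> f l > 0 then 1 / dens m \<rho> f l else 0)" using d by simp
  also have "\<dots> \<le> (\<Sum>l\<in>{..m}. (if dens m \<rho> f l > 0 then 1 / dens m \<rho> f l else 0))"
    by (rule member_le_sum) (use l in auto)
  also have "\<dots> \<le> ?B"
    by (rule member_le_sum) (auto intro!: sum_nonneg)
  finally show "x \<le> ?B" .
qed

lemma dens_ratio_le_C_facility:
  "i < m \<Longrightarrow> set_pmf p \<subseteq> A i \<Longrightarrow> l \<le> m \<Longrightarrow> dens m \<rho> (f :: 'f::finite) l > 0 \<Longrightarrow>
   dens m (prod_pol m (\<pi>s(i := p))) f l / dens m \<rho> f l \<le> C_facility m A \<rho> \<pi>s"
  unfolding C_facility_def by (rule cSup_upper[OF _ bdd_above_C_facility_ratios]) blast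

lemma C_facility_nonneg:
  assumes "1 \<le> m" "is_prod_policy m A \<pi>s"
  shows "0 \<le> C_facility m A \<rho> (\<pi>s :: nat \<Rightarrow> 'f::finite set pmf)"
proof -
  obtain a where a: "a \<in> set_pmf \<rho>" using set_pmf_not_empty[of \<rho>] by blast
  define f :: 'f where "f = undefined"
  have d: "dens m \<rho> f (nf m f a) > 0"
    unfolding dens_def by (rule measure_pmf_posI[OF a]) simp
  have "0 \<le> dens m (prod_pol m (\<pi>s(0 := \<pi>s 0))) f (nf m f a) / dens m \<rho> f (nf m f a)"
    by (intro divide_nonneg_nonneg dens_nonneg)
  also have "\<dots> \<le> C_facility m A \<rho> \<pi>s"
    using assms d by (intro dens_ratio_le_C_facility) (auto simp: is_prod_policy_def nf_le)
  finally show ?thesis .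
qed

lemma mult_sqrt_le_of_count_bound:
  fixes d t M N :: real
  assumes "0 < d" "0 < t" "1 \<le> M" "1 \<le> N" "N * d \<le> 4 * t * M"
  shows "d * sqrt (t / M) \<le> 2 * t * sqrt d / sqrt N"
proof (rule power2_le_imp_le)
  show "0 \<le> 2 * t * sqrt d / sqrt N" using assms by simp
  have "d\<^sup>2 * t * N = (d * t) * (N * d)" by (simp add: power2_eq_square)
  also have "\<dots> \<le> (d * t) * (4 * t * M)" using assms by (intro mult_left_mono) auto
  finally have "d\<^sup>2 * t * N \<le> 4 * t\<^sup>2 * d * M" by (simp add: power2_eq_square mult_ac)
  thus "(d * sqrt (t / M))\<^sup>2 \<le> (2 * t * sqrt d / sqrt N)\<^sup>2"
    using assms by (simp add: power_mult_distrib power_divide divide_le_eq le_divide_eq mult_ac)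
qed

section \<open>The gap bound on the good event\<close>

context
  fixes m n :: nat and R :: "'f::finite \<Rightarrow> nat \<Rightarrow> real measure" and \<iota> :: real
    and D :: "nat \<Rightarrow> (nat \<Rightarrow> 'f set) \<times> ('f \<Rightarrow> real)"
  assumes rewards: "bounded_rewards m R"
    and iota_nonneg: "0 \<le> \<iota>"
    and est_close: "\<And>f l. 1 \<le> l \<Longrightarrow> l \<le> m \<Longrightarrow>
      \<bar>facility_est m n D f l - mean_rew R f l\<bar> \<le> facility_bonus m n \<iota> D f l"
begin

lemma abs_rhat_minus_player_rew_le:
  assumes "i < m"
  shows "\<bar>rhat m n D i a - player_rew m R i a\<bar> \<le> bonus m n \<iota> D i a"
proof -
  have "\<bar>rhat m n D i a - player_rew m R i a\<bar>
      = \<bar>\<Sum>f\<in>a i. facility_est m n D f (nf m f a) - mean_rew R f (nf m f a)\<bar>"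
    unfolding rhat_eq_sum_facility_est player_rew_def by (simp add: sum_subtractf)
  also have "\<dots> \<le> (\<Sum>f\<in>a i. \<bar>facility_est m n D f (nf m f a) - mean_rew R f (nf m f a)\<bar>)"
    by (rule sum_abs)
  also have "\<dots> \<le> bonus m n \<iota> D i a"
    unfolding bonus_eq_sum_facility_bonus
    by (intro sum_mono est_close one_le_nf[of i m f a for f, OF assms] nf_le)
  finally show ?thesis .
qed

lemma
  assumes "i < m"
  shows Val_le_Vup: "Val m R i \<pi> \<le> Vup m n \<iota> D i \<pi>"
    and Vlo_le_Val: "Vlo m n \<iota> D i \<pi> \<le> Val m R i \<pi>"
    and Vup_le_Val_plus_bonus: "Vup m n \<iota> D i \<pi>
      \<le> Val m R i \<pi> + 2 * measure_pmf.expectation (prod_pol m \<pi>) (bonus m n \<iota> D i)"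
    and Val_minus_bonus_le_Vlo: "Val m R i \<pi> - 2 * measure_pmf.expectation (prod_pol m \<pi>) (bonus m n \<iota> D i)
      \<le> Vlo m n \<iota> D i \<pi>"
proof -
  note int = integrable_player_rew[OF rewards assms] integrable_rhat integrable_bonus[OF iota_nonneg]
  have up: "player_rew m R i a \<le> rhat m n D i a + bonus m n \<iota> D i a"
    and lo: "rhat m n D i a - bonus m n \<iota> D i a \<le> player_rew m R i a"
    and up2: "rhat m n D i a + bonus m n \<iota> D i a \<le> player_rew m R i a + 2 * bonus m n \<iota> D i a"
    and lo2: "player_rew m R i a - 2 * bonus m n \<iota> D i a \<le> rhat m n D i a - bonus m n \<iota> D i a" for a
    using abs_rhat_minus_player_rew_le[OF assms, of a] by (auto simp: abs_le_iff)
  let ?E = "measure_pmf.expectation (prod_pol m \<pi>)"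
  show "Val m R i \<pi> \<le> Vup m n \<iota> D i \<pi>" unfolding Val_def Vup_def
    by (intro integral_mono int Bochner_Integration.integrable_add up)
  show "Vlo m n \<iota> D i \<pi> \<le> Val m R i \<pi>" unfolding Val_def Vlo_def
    by (intro integral_mono int Bochner_Integration.integrable_diff lo)
  have "Vup m n \<iota> D i \<pi> \<le> ?E (\<lambda>a. player_rew m R i a + 2 * bonus m n \<iota> D i a)"
    unfolding Vup_def
    by (intro integral_mono int Bochner_Integration.integrable_add integrable_mult_right up2)
  also have "\<dots> = Val m R i \<pi> + 2 * ?E (bonus m n \<iota> D i)"
    unfolding Val_def by (simp add: int)
  finally show "Vup m n \<iota> D i \<pi> \<le> Val m R i \<pi> + 2 * ?E (bonus m n \<iota> D i)" .
  have "Val m R i \<pi> - 2 * ?E (bonus m n \<iota> D i) = ?E (\<lambda>a. player_rew m R i a - 2 * bonus m n \<iota> D i a)"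
    unfolding Val_def by (simp add: int)
  also have "\<dots> \<le> Vlo m n \<iota> D i \<pi>"
    unfolding Vlo_def
    by (intro integral_mono int Bochner_Integration.integrable_diff integrable_mult_right lo2)
  finally show "Val m R i \<pi> - 2 * ?E (bonus m n \<iota> D i) \<le> Vlo m n \<iota> D i \<pi>" .
qed

end

lemma Max_image_lessThan_le: "1 \<le> (m :: nat) \<Longrightarrow> (\<And>i. i < m \<Longrightarrow> g i \<le> c) \<Longrightarrow> Max (g ` {..<m}) \<le> (c :: real)"
  by (subst Max_le_iff) (auto simp: lessThan_empty_iff)

lemma deviation_policies_nonempty: "A i \<noteq> {} \<Longrightarrow> {p. set_pmf p \<subseteq> A i} \<noteq> {}"
proof -
  assume "A i \<noteq> {}"
  then obtain x where "x \<in> A i" by blast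
  hence "return_pmf x \<in> {p. set_pmf p \<subseteq> A i}" by simp
  thus ?thesis by blast
qed

lemma bdd_above_Val_deviations:
  assumes "bounded_rewards m R" "i < m"
  shows "bdd_above ((\<lambda>p. Val m R i (\<pi>(i := p) :: nat \<Rightarrow> 'f::finite set pmf)) ` X)"
proof (rule bdd_aboveI2)
  fix p
  show "Val m R i (\<pi>(i := p)) \<le> real CARD('f)"
    unfolding Val_def using abs_player_rew_le[OF assms]
    by (intro measure_pmf.integral_le_const integrable_player_rew[OF assms]) (auto simp: abs_le_iff)
qed

lemma bdd_above_Vup_deviations:
  assumes "0 \<le> \<iota>"
  shows "bdd_above ((\<lambda>p. Vup m n \<iota> D i (\<pi>(i := p) :: nat \<Rightarrow> 'f::finite set pmf)) ` X)"
proof (rule bdd_aboveI2)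
  fix p
  have "rhat m n D i a + bonus m n \<iota> D i a \<le> (\<Sum>f\<in>UNIV. \<Sum>k<n. \<bar>snd (D k) f\<bar>) + real CARD('f) * sqrt \<iota>"
    for a :: "nat \<Rightarrow> 'f set"
    using abs_rhat_le[of m n D i a] bonus_le[OF assms, of m n D i a] by (simp add: abs_le_iff)
  thus "Vup m n \<iota> D i (\<pi>(i := p)) \<le> (\<Sum>f\<in>UNIV. \<Sum>k<n. \<bar>snd (D k) f\<bar>) + real CARD('f) * sqrt \<iota>"
    unfolding Vup_def
    by (intro measure_pmf.integral_le_const Bochner_Integration.integrable_add integrable_rhat
        integrable_bonus assms AE_I2)
qed

lemma best_resp_le_Val_if_is_NE: "is_NE m A R \<pi>s \<Longrightarrow> i < m \<Longrightarrow> best_resp m A R i \<pi>s \<le> Val m R i \<pi>s"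
proof -
  assume "is_NE m A R \<pi>s" "i < m"
  moreover have "best_resp m A R i \<pi>s - Val m R i \<pi>s \<le> Gap m A R \<pi>s"
    unfolding Gap_def using \<open>i < m\<close> by (intro Max_ge) auto
  ultimately show ?thesis by (simp add: is_NE_def)
qed

context
  fixes m n :: nat and A :: "nat \<Rightarrow> 'f::finite set set" and R :: "'f \<Rightarrow> nat \<Rightarrow> real measure"
    and \<rho> :: "(nat \<Rightarrow> 'f set) pmf" and \<pi>s :: "nat \<Rightarrow> 'f set pmf" and \<iota> :: real
    and D :: "nat \<Rightarrow> (nat \<Rightarrow> 'f set) \<times> ('f \<Rightarrow> real)"
  assumes m_pos: "1 \<le> m" and n_pos: "1 \<le> n"
    and actions_nonempty: "\<forall>i<m. A i \<noteq> {}"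
    and rewards: "bounded_rewards m R"
    and iota_ge_1: "1 \<le> \<iota>"
    and NE: "is_NE m A R \<pi>s"
    and one_unit: "one_unit_dev m A \<rho> \<pi>s"
    and est_close: "\<And>f l. 1 \<le> l \<Longrightarrow> l \<le> m \<Longrightarrow>
      \<bar>facility_est m n D f l - mean_rew R f l\<bar> \<le> facility_bonus m n \<iota> D f l"
    and count_large: "\<And>f l. 1 \<le> l \<Longrightarrow> l \<le> m \<Longrightarrow> dens m \<rho> f l > 0 \<Longrightarrow>
      real n * dens m \<rho> f l \<le> 4 * \<iota> * real (max (Ncnt m n D f l) 1)"
begin

abbreviation "deviation_bonus_bound \<equiv>
  2 * sqrt (real m + 1) * C_facility m A \<rho> \<pi>s * \<iota> * real CARD('f) / sqrt (real n)"

lemma iota_nonneg: "0 \<le> \<iota>"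
  using iota_ge_1 by simp

lemma NE_is_prod_policy: "is_prod_policy m A \<pi>s"
  using NE by (simp add: is_NE_def)

lemma dens_mult_facility_bonus_le:
  assumes "j < m" "set_pmf p \<subseteq> A j" "1 \<le> l" "l \<le> m"
  shows "dens m (prod_pol m (\<pi>s(j := p))) f l * facility_bonus m n \<iota> D f l
    \<le> 2 * C_facility m A \<rho> \<pi>s * \<iota> / sqrt n * sqrt (dens m \<rho> f l)"
proof (cases "dens m \<rho> f l > 0")
  case False
  hence "dens m (prod_pol m (\<pi>s(j := p))) f l = 0"
    using one_unit assms dens_nonneg[of m "prod_pol m (\<pi>s(j := p))" f l]
    unfolding one_unit_dev_def by force
  thus ?thesis using False dens_nonneg[of m \<rho> f l] by simp
next
  case True
  define d where "d = dens m \<rho> f l"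
  define M where "M = real (max (Ncnt m n D f l) 1)"
  have "dens m (prod_pol m (\<pi>s(j := p))) f l / d \<le> C_facility m A \<rho> \<pi>s"
    unfolding d_def using assms True by (intro dens_ratio_le_C_facility) auto
  hence "dens m (prod_pol m (\<pi>s(j := p))) f l \<le> C_facility m A \<rho> \<pi>s * d"
    using True by (simp add: d_def divide_le_eq)
  hence "dens m (prod_pol m (\<pi>s(j := p))) f l * sqrt (\<iota> / M) \<le> C_facility m A \<rho> \<pi>s * d * sqrt (\<iota> / M)"
    using iota_nonneg by (intro mult_right_mono) (simp_all add: M_def)
  hence "dens m (prod_pol m (\<pi>s(j := p))) f l * facility_bonus m n \<iota> D f l
      \<le> C_facility m A \<rho> \<pi>s * (d * sqrt (\<iota> / M))"
    by (simp add: facility_bonus_def M_def mult.assoc)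
  also have "\<dots> \<le> C_facility m A \<rho> \<pi>s * (2 * \<iota> * sqrt d / sqrt n)"
  proof (intro mult_left_mono C_facility_nonneg[OF m_pos NE_is_prod_policy])
    show "d * sqrt (\<iota> / M) \<le> 2 * \<iota> * sqrt d / sqrt n"
      using count_large[OF assms(3,4) True] iota_ge_1 n_pos True
      by (intro mult_sqrt_le_of_count_bound) (simp_all add: d_def M_def)
  qed
  finally show ?thesis unfolding d_def by (simp add: mult_ac)
qed

lemma expected_bonus_deviation_le:
  assumes "j < m" "set_pmf p \<subseteq> A j"
  shows "measure_pmf.expectation (prod_pol m (\<pi>s(j := p))) (bonus m n \<iota> D j) \<le> deviation_bonus_bound"
proof -
  let ?c = "2 * C_facility m A \<rho> \<pi>s * \<iota> / sqrt n"
  have "measure_pmf.expectation (prod_pol m (\<pi>s(j := p))) (bonus m n \<iota> D j)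
      \<le> (\<Sum>f\<in>UNIV. \<Sum>l\<in>{1..m}. dens m (prod_pol m (\<pi>s(j := p))) f l * facility_bonus m n \<iota> D f l)"
    by (rule expected_bonus_le_sum_dens[OF assms(1) iota_nonneg])
  also have "\<dots> \<le> (\<Sum>f\<in>(UNIV :: 'f set). ?c * (\<Sum>l\<in>{1..m}. sqrt (dens m \<rho> f l)))"
    unfolding sum_distrib_left
    by (intro sum_mono dens_mult_facility_bonus_le[OF assms]) auto
  also have "\<dots> \<le> (\<Sum>f\<in>(UNIV :: 'f set). ?c * sqrt (real m + 1))"
    using C_facility_nonneg[OF m_pos NE_is_prod_policy] iota_nonneg
    by (intro sum_mono mult_left_mono sum_sqrt_dens_le) auto
  also have "\<dots> = deviation_bonus_bound" by (simp add: mult_ac)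
  finally show ?thesis .
qed

lemma Vup_dag_NE_le:
  assumes j: "j < m"
  shows "Vup_dag m A n \<iota> D j \<pi>s \<le> Val m R j \<pi>s + 2 * deviation_bonus_bound"
  unfolding Vup_dag_def
proof (rule cSUP_least)
  show "{p. set_pmf p \<subseteq> A j} \<noteq> {}"
    using j actions_nonempty by (intro deviation_policies_nonempty) blast
  fix p assume p: "p \<in> {p. set_pmf p \<subseteq> A j}"
  have "Vup m n \<iota> D j (\<pi>s(j := p))
      \<le> Val m R j (\<pi>s(j := p)) + 2 * measure_pmf.expectation (prod_pol m (\<pi>s(j := p))) (bonus m n \<iota> D j)"
    by (rule Vup_le_Val_plus_bonus[OF rewards iota_nonneg est_close j])
  also have "\<dots> \<le> best_resp m A R j \<pi>s + 2 * deviation_bonus_bound"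
  proof (intro add_mono mult_left_mono)
    show "Val m R j (\<pi>s(j := p)) \<le> best_resp m A R j \<pi>s"
      unfolding best_resp_def by (rule cSUP_upper[OF p bdd_above_Val_deviations[OF rewards j]])
    show "measure_pmf.expectation (prod_pol m (\<pi>s(j := p))) (bonus m n \<iota> D j) \<le> deviation_bonus_bound"
      using p by (intro expected_bonus_deviation_le[OF j]) simp
  qed simp
  also have "\<dots> \<le> Val m R j \<pi>s + 2 * deviation_bonus_bound"
    using best_resp_le_Val_if_is_NE[OF NE j] by simp
  finally show "Vup m n \<iota> D j (\<pi>s(j := p)) \<le> Val m R j \<pi>s + 2 * deviation_bonus_bound" .
qed

lemma Val_NE_le_Vlo:
  assumes "j < m"
  shows "Val m R j \<pi>s - 2 * deviation_bonus_bound \<le> Vlo m n \<iota> D j \<pi>s"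
proof -
  have "set_pmf (\<pi>s j) \<subseteq> A j"
    using NE_is_prod_policy assms by (simp add: is_prod_policy_def)
  from expected_bonus_deviation_le[OF assms this]
  have "measure_pmf.expectation (prod_pol m \<pi>s) (bonus m n \<iota> D j) \<le> deviation_bonus_bound"
    by simp
  thus ?thesis
    using Val_minus_bonus_le_Vlo[OF rewards iota_nonneg est_close assms, of \<pi>s] by linarith
qed

lemma surrogate_NE_le: "surrogate m A n \<iota> D \<pi>s \<le> 4 * deviation_bonus_bound"
  unfolding surrogate_def
proof (intro Max_image_lessThan_le m_pos)
  fix j assume "j < m"
  thus "Vup_dag m A n \<iota> D j \<pi>s - Vlo m n \<iota> D j \<pi>s \<le> 4 * deviation_bonus_bound"
    using Vup_dag_NE_le[of j] Val_NE_le_Vlo[of j] by linarith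
qed

lemma Gap_le_if_is_output:
  assumes "is_output m A n \<iota> D \<pi>"
  shows "Gap m A R \<pi> \<le> 8 * sqrt (real m + 1) * C_facility m A \<rho> \<pi>s * \<iota> * real CARD('f) / sqrt (real n)"
proof -
  have "best_resp m A R i \<pi> - Val m R i \<pi> \<le> 4 * deviation_bonus_bound" if i: "i < m" for i
  proof -
    have "best_resp m A R i \<pi> \<le> Vup_dag m A n \<iota> D i \<pi>"
      unfolding best_resp_def Vup_dag_def
    proof (intro cSUP_mono deviation_policies_nonempty bdd_above_Vup_deviations iota_nonneg)
      show "A i \<noteq> {}" using i actions_nonempty by blast
      fix p assume "p \<in> {p. set_pmf p \<subseteq> A i}"
      thus "\<exists>q\<in>{p. set_pmf p \<subseteq> A i}. Val m R i (\<pi>(i := p)) \<le> Vup m n \<iota> D i (\<pi>(i := q))"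
        using Val_le_Vup[OF rewards iota_nonneg est_close i, of "\<pi>(i := p)"] by blast
    qed
    moreover have "Vup_dag m A n \<iota> D i \<pi> - Vlo m n \<iota> D i \<pi> \<le> surrogate m A n \<iota> D \<pi>"
      unfolding surrogate_def using i by (intro Max_ge) auto
    moreover have "surrogate m A n \<iota> D \<pi> \<le> surrogate m A n \<iota> D \<pi>s"
      using assms NE_is_prod_policy unfolding is_output_def by blast
    ultimately show ?thesis
      using Vlo_le_Val[OF rewards iota_nonneg est_close i, of \<pi>] surrogate_NE_le by linarith
  qed
  hence "Gap m A R \<pi> \<le> 4 * deviation_bonus_bound"
    unfolding Gap_def by (intro Max_image_lessThan_le m_pos)
  thus ?thesis by simp
qed

end

lemma Gap_le_if_good_data:
  fixes A :: "nat \<Rightarrow> 'f::finite set set"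
  assumes "1 \<le> m" "1 \<le> n" "\<forall>i<m. A i \<noteq> {}" "bounded_rewards m R" "1 \<le> \<iota>"
    and "is_NE m A R \<pi>s" "one_unit_dev m A \<rho> \<pi>s" "good_data m n \<iota> R \<rho> D" "is_output m A n \<iota> D \<pi>"
  shows "Gap m A R \<pi> \<le> 8 * sqrt (real m + 1) * C_facility m A \<rho> \<pi>s * \<iota> * real CARD('f) / sqrt (real n)"
  using assms(8) unfolding good_data_def by (intro Gap_le_if_is_output[OF assms(1-7) _ _ assms(9)]) auto

section \<open>The sampling model\<close>

definition sample_space :: "((nat \<Rightarrow> 'f set) \<times> ('f \<Rightarrow> real)) measure" where
  "sample_space = count_space UNIV \<Otimes>\<^sub>M PiM UNIV (\<lambda>_. borel)"

definition reward_draw :: "nat \<Rightarrow> ('f \<Rightarrow> nat \<Rightarrow> real measure) \<Rightarrow> (nat \<Rightarrow> 'f set) \<Rightarrow> ('f \<Rightarrow> real) measure" where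
  "reward_draw m R a = PiM UNIV (\<lambda>f. if nf m f a \<ge> 1 then R f (nf m f a) else return borel 0)"

definition sample_kernel :: "nat \<Rightarrow> ('f \<Rightarrow> nat \<Rightarrow> real measure) \<Rightarrow> (nat \<Rightarrow> 'f set)
    \<Rightarrow> ((nat \<Rightarrow> 'f set) \<times> ('f \<Rightarrow> real)) measure" where
  "sample_kernel m R a = distr (reward_draw m R a) sample_space (\<lambda>r. (a, r))"

lemma sample_meas_eq_bind: "sample_meas m R \<rho> = measure_pmf \<rho> \<bind> sample_kernel m R"
  unfolding sample_meas_def sample_kernel_def reward_draw_def sample_space_def ..

lemma sets_sample_kernel: "sets (sample_kernel m R a) = sets sample_space"
  unfolding sample_kernel_def by simp

lemma measurable_fst_sample:
  "k \<in> {..<n} \<Longrightarrow> (\<lambda>D. fst (D k)) \<in> measurable (PiM {..<n} (\<lambda>_. sample_space)) (count_space UNIV)"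
  unfolding sample_space_def by measurable

lemma measurable_indicator_nf_sample[measurable]: "k \<in> {..<n} \<Longrightarrow>
   (\<lambda>D. if nf m f (fst (D k)) = l then (1::real) else 0) \<in> borel_measurable (PiM {..<n} (\<lambda>_. sample_space))"
  using measurable_compose[OF measurable_fst_sample, of k n "\<lambda>a. if nf m f a = l then 1 else (0::real)" borel]
  by simp

lemma measurable_snd_sample[measurable]:
  "k \<in> {..<n} \<Longrightarrow> (\<lambda>D. snd (D k) f) \<in> borel_measurable (PiM {..<n} (\<lambda>_. sample_space))"
  unfolding sample_space_def by measurable

lemma real_Ncnt_eq_sum: "real (Ncnt m n D f l) = (\<Sum>k<n. if nf m f (fst (D k)) = l then 1 else 0)"
  unfolding Ncnt_def by (simp add: sum.inter_filter[symmetric])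

lemma measurable_max_Ncnt[measurable]:
  "(\<lambda>D. real (max (Ncnt m n D f l) 1)) \<in> borel_measurable (PiM {..<n} (\<lambda>_. sample_space))"
  unfolding of_nat_max real_Ncnt_eq_sum
  by (intro borel_measurable_max borel_measurable_sum measurable_indicator_nf_sample) auto

lemma measurable_facility_est[measurable]:
  "(\<lambda>D. facility_est m n D f l) \<in> borel_measurable (PiM {..<n} (\<lambda>_. sample_space))"
  unfolding facility_est_def by measurable

lemma measurable_facility_bonus[measurable]:
  "(\<lambda>D. facility_bonus m n \<iota> D f l) \<in> borel_measurable (PiM {..<n} (\<lambda>_. sample_space))"
  unfolding facility_bonus_def by measurable

context
  fixes m n :: nat and R :: "'f::finite \<Rightarrow> nat \<Rightarrow> real measure"
  assumes rewards: "bounded_rewards m R"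
begin

lemma prob_space_reward_component: "prob_space (if nf m f a \<ge> 1 then R f (nf m f a) else return borel 0)"
  using rewards nf_le[of m f a] by (auto simp: bounded_rewards_def intro: prob_space_return)

lemma sets_reward_component: "sets (if nf m f a \<ge> 1 then R f (nf m f a) else return borel 0) = sets borel"
  using rewards nf_le[of m f a] by (auto simp: bounded_rewards_def)

lemma prob_space_sample_kernel: "prob_space (sample_kernel m R a)"
proof -
  have "(\<lambda>r. (a, r)) \<in> measurable (reward_draw m R a) sample_space"
    unfolding reward_draw_def sample_space_def
    by (subst measurable_cong_sets[OF sets_PiM_cong[OF refl sets_reward_component] refl]) measurable
  thus ?thesis
    unfolding sample_kernel_def reward_draw_def
    by (intro prob_space.prob_space_distr prob_space_PiM prob_space_reward_component)
qed

lemma measurable_sample_kernel: "sample_kernel m R \<in> measurable (measure_pmf \<rho>) (subprob_algebra sample_space)"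
  by (auto simp: space_subprob_algebra prob_space_imp_subprob_space prob_space_sample_kernel
      sets_sample_kernel)

lemma prob_space_sample_meas: "prob_space (sample_meas m R \<rho>)"
  unfolding sample_meas_eq_bind
  by (rule prob_space.prob_space_bind[OF measure_pmf.prob_space_axioms _ measurable_sample_kernel])
     (simp add: prob_space_sample_kernel)

lemma sets_sample_meas: "sets (sample_meas m R \<rho>) = sets sample_space"
  unfolding sample_meas_eq_bind by (rule sets_bind) (auto simp: sets_sample_kernel)

lemma AE_sample_kernel:
  assumes "{x \<in> space sample_space. P x} \<in> sets sample_space"
  shows "(AE x in sample_kernel m R a. P x) \<longleftrightarrow> (AE r in reward_draw m R a. P (a, r))"
  unfolding sample_kernel_def
  by (rule AE_distr_iff[OF _ assms]) (unfold reward_draw_def sample_space_def,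
      subst measurable_cong_sets[OF sets_PiM_cong[OF refl sets_reward_component] refl], measurable)

lemma AE_sample_kernel_fst: "AE x in sample_kernel m R a. fst x = a"
  by (subst AE_sample_kernel) (auto simp: sample_space_def)

lemma AE_sample_kernel_reward_bounded:
  assumes "1 \<le> nf m f a"
  shows "AE x in sample_kernel m R a. snd x f \<in> {-1..1}"
proof -
  have "AE x in R f (nf m f a). -1 \<le> x \<and> x \<le> 1"
    using rewards assms nf_le[of m f a] by (auto simp: bounded_rewards_def)
  hence "AE r in reward_draw m R a. r f \<in> {-1..1}"
    unfolding reward_draw_def using assms
    by (intro AE_PiM_component[where P="\<lambda>x. x \<in> {-1..1}"] prob_space_reward_component) auto
  thus ?thesis by (subst AE_sample_kernel) (auto simp: sample_space_def)
qed

lemma integral_sample_kernel_reward: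
  assumes "1 \<le> nf m f a"
  shows "integral\<^sup>L (sample_kernel m R a) (\<lambda>x. snd x f) = mean_rew R f (nf m f a)"
proof -
  have pair: "(\<lambda>r. (a, r)) \<in> measurable (reward_draw m R a) sample_space"
    unfolding reward_draw_def sample_space_def
    by (subst measurable_cong_sets[OF sets_PiM_cong[OF refl sets_reward_component] refl]) measurable
  have "integral\<^sup>L (sample_kernel m R a) (\<lambda>x. snd x f) = integral\<^sup>L (reward_draw m R a) (\<lambda>r. r f)"
    unfolding sample_kernel_def by (subst integral_distr[OF pair]) (auto simp: sample_space_def)
  also have "\<dots> = integral\<^sup>L (distr (reward_draw m R a)
      (if nf m f a \<ge> 1 then R f (nf m f a) else return borel 0) (\<lambda>r. r f)) (\<lambda>x. x)"
    unfolding reward_draw_def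
    by (rule integral_distr[symmetric], rule measurable_component_singleton, simp,
        subst measurable_cong_sets[OF sets_reward_component refl], simp)
  also have "\<dots> = mean_rew R f (nf m f a)"
    unfolding reward_draw_def mean_rew_def
    by (subst distr_PiM_component, rule prob_space_reward_component, simp) (use assms in simp)
  finally show ?thesis .
qed

end

section \<open>The good event and its probability\<close>

lemma sqrt_mult_le_abs_sum_minus:
  fixes N S \<mu> t :: real
  assumes "0 < N" "0 \<le> t" "sqrt (t / N) < \<bar>S / N - \<mu>\<bar>"
  shows "sqrt (t * N) \<le> \<bar>S - N * \<mu>\<bar>"
proof -
  have "sqrt (t * N) = N * sqrt (t / N)"
    using assms(1) by (simp add: real_sqrt_mult real_sqrt_divide field_simps)
  also have "\<dots> \<le> N * \<bar>S / N - \<mu>\<bar>" using assms by (intro mult_left_mono) auto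
  also have "\<dots> = \<bar>S - N * \<mu>\<bar>" using assms(1) by (simp add: abs_mult field_simps)
  finally show ?thesis .
qed

lemma facility_est_eq_if_actions:
  assumes "\<forall>k\<in>{..<n}. fst (D k) = as k"
  shows "Ncnt m n D f l = card {k \<in> {..<n}. nf m f (as k) = l}"
    and "facility_est m n D f l = (\<Sum>k\<in>{k \<in> {..<n}. nf m f (as k) = l}. snd (D k) f)
      / real (max (card {k \<in> {..<n}. nf m f (as k) = l}) 1)"
proof -
  have K: "{k \<in> {..<n}. nf m f (fst (D k)) = l} = {k \<in> {..<n}. nf m f (as k) = l}"
    using assms by auto
  thus N: "Ncnt m n D f l = card {k \<in> {..<n}. nf m f (as k) = l}" unfolding Ncnt_def by simp
  have "(\<Sum>k<n. snd (D k) f * (if nf m f (fst (D k)) = l then 1 else 0))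
      = (\<Sum>k\<in>{k \<in> {..<n}. nf m f (fst (D k)) = l}. snd (D k) f)"
    by (subst sum.inter_filter, simp) (rule sum.cong, auto)
  hence "(\<Sum>k<n. snd (D k) f * (if nf m f (fst (D k)) = l then 1 else 0))
      = (\<Sum>k\<in>{k \<in> {..<n}. nf m f (as k) = l}. snd (D k) f)"
    unfolding K .
  thus "facility_est m n D f l = (\<Sum>k\<in>{k \<in> {..<n}. nf m f (as k) = l}. snd (D k) f)
      / real (max (card {k \<in> {..<n}. nf m f (as k) = l}) 1)"
    unfolding facility_est_def N by simp
qed

definition est_fail_event :: "nat \<Rightarrow> nat \<Rightarrow> real \<Rightarrow> ('f \<Rightarrow> nat \<Rightarrow> real measure) \<Rightarrow> 'f \<Rightarrow> nat
    \<Rightarrow> (nat \<Rightarrow> (nat \<Rightarrow> 'f set) \<times> ('f \<Rightarrow> real)) set" where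
  "est_fail_event m n \<iota> R f l = {D \<in> space (PiM {..<n} (\<lambda>_. sample_space)).
     facility_bonus m n \<iota> D f l < \<bar>facility_est m n D f l - mean_rew R f l\<bar>}"

definition count_fail_event :: "nat \<Rightarrow> nat \<Rightarrow> real \<Rightarrow> (nat \<Rightarrow> 'f set) pmf \<Rightarrow> 'f \<Rightarrow> nat
    \<Rightarrow> (nat \<Rightarrow> (nat \<Rightarrow> 'f set) \<times> ('f \<Rightarrow> real)) set" where
  "count_fail_event m n \<iota> \<rho> f l = {D \<in> space (PiM {..<n} (\<lambda>_. sample_space)).
     4 * \<iota> * real (max (Ncnt m n D f l) 1) < real n * dens m \<rho> f l}"

lemma sets_est_fail_event: "est_fail_event m n \<iota> R f l \<in> sets (PiM {..<n} (\<lambda>_. sample_space))"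
  unfolding est_fail_event_def by measurable

lemma sets_count_fail_event: "count_fail_event m n \<iota> \<rho> f l \<in> sets (PiM {..<n} (\<lambda>_. sample_space))"
  unfolding count_fail_event_def by measurable

lemma not_in_est_fail_event_if_no_match:
  assumes "bounded_rewards m R" "1 \<le> l" "l \<le> m" "1 \<le> \<iota>"
    and "\<forall>k\<in>{..<n}. fst (D k) = as k" "{k \<in> {..<n}. nf m f (as k) = l} = {}"
  shows "D \<notin> est_fail_event m n \<iota> R f l"
proof -
  have "facility_est m n D f l = 0" "facility_bonus m n \<iota> D f l = sqrt \<iota>"
    using facility_est_eq_if_actions[OF assms(5), of m f l] unfolding assms(6)
    by (simp_all add: facility_bonus_def)
  moreover have "\<bar>mean_rew R f l\<bar> \<le> sqrt \<iota>"
    using abs_mean_rew_le_1[OF assms(1-3), of f] real_sqrt_ge_1_iff[of \<iota>] assms(4) by linarith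
  ultimately show ?thesis unfolding est_fail_event_def by auto
qed

lemma sum_deviation_if_in_est_fail_event:
  fixes \<iota> :: real
  assumes "0 \<le> \<iota>" "\<forall>k\<in>{..<n}. fst (D k) = as k"
    and "K = {k \<in> {..<n}. nf m f (as k) = l}" "K \<noteq> {}" "D \<in> est_fail_event m n \<iota> R f l"
  shows "sqrt (\<iota> * card K) \<le> \<bar>(\<Sum>k\<in>K. snd (D k) f) - card K * mean_rew R f l\<bar>"
proof (rule sqrt_mult_le_abs_sum_minus)
  show "0 < real (card K)" using assms(3,4) by (simp add: card_gt_0_iff)
  hence "max (card K) (Suc 0) = card K" by simp
  thus "sqrt (\<iota> / card K) < \<bar>(\<Sum>k\<in>K. snd (D k) f) / card K - mean_rew R f l\<bar>"
    using facility_est_eq_if_actions[OF assms(2), of m f l] assms(5) unfolding assms(3)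
    by (simp add: est_fail_event_def facility_bonus_def)
qed (use assms(1) in simp)

lemma (in prob_space) prob_compl_UN_ge:
  assumes "finite I" "\<And>p. p \<in> I \<Longrightarrow> B p \<in> events" "\<And>p. p \<in> I \<Longrightarrow> prob (B p) \<le> \<epsilon>"
  shows "1 - real (card I) * \<epsilon> \<le> prob (space M - (\<Union>p\<in>I. B p))"
proof -
  have "prob (\<Union>p\<in>I. B p) \<le> (\<Sum>p\<in>I. prob (B p))"
    using assms by (intro finite_measure_subadditive_finite) auto
  also have "\<dots> \<le> real (card I) * \<epsilon>"
    using sum_mono[of I "\<lambda>p. prob (B p)" "\<lambda>_. \<epsilon>"] assms(3) by simp
  finally show ?thesis using assms by (subst prob_compl) auto
qed

lemma expectation_exp_neg_indicator:
  "measure_pmf.expectation \<rho> (\<lambda>a. exp (- of_bool (a \<in> S)) :: real)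
    = 1 - (1 - exp (-1)) * measure_pmf.prob \<rho> S"
proof -
  have "measure_pmf.expectation \<rho> (\<lambda>a. exp (- of_bool (a \<in> S)) :: real)
      = measure_pmf.expectation \<rho> (\<lambda>a. 1 - (1 - exp (-1)) * indicator S a)"
    by (intro Bochner_Integration.integral_cong) (auto simp: indicator_def)
  also have "\<dots> = 1 - (1 - exp (-1)) * measure_pmf.prob \<rho> S"
  proof -
    have "integrable (measure_pmf \<rho>) (\<lambda>a. (1 - exp (-1)) * indicator S a :: real)"
      by (intro integrable_measure_pmf_bounded[where B=1]) (auto simp: indicator_def)
    thus ?thesis by (simp add: Bochner_Integration.integral_diff)
  qed
  finally show ?thesis .
qed

text \<open>Markov's inequality for \<open>exp (t - #hits)\<close>, whose expectation factorises over the draws.\<close>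
lemma prob_Pi_pmf_hits_less_le:
  fixes \<rho> :: "'a pmf" and t :: real
  shows "measure_pmf.prob (Pi_pmf {..<n} dflt (\<lambda>_. \<rho>)) {as. real (card {k \<in> {..<n}. as k \<in> S}) < t}
    \<le> exp (t - real n * ((1 - exp (-1)) * measure_pmf.prob \<rho> S))"
proof -
  define q where "q = (1 - exp (-1)) * measure_pmf.prob \<rho> S"
  define ind where "ind = (\<lambda>a. of_bool (a \<in> S) :: real)"
  define Few where "Few = {as. real (card {k \<in> {..<n}. as k \<in> S}) < t}"
  have q: "0 \<le> q" "q \<le> 1"
    unfolding q_def by (auto intro!: mult_le_one)
  have hits: "(\<Prod>k<n. exp (- ind (as k))) = exp (- real (card {k \<in> {..<n}. as k \<in> S}))" for as
  proof -
    have "{k \<in> {..<n}. as k \<in> S} = {..<n} \<inter> {k. as k \<in> S}" by blast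
    thus ?thesis unfolding ind_def by (simp add: exp_sum[symmetric] sum_negf)
  qed
  have pointwise: "indicator Few as \<le> exp t * (\<Prod>k<n. exp (- ind (as k)))" for as
    unfolding hits mult_exp_exp by (simp add: Few_def indicator_def)
  have int: "integrable (measure_pmf \<rho>) (\<lambda>a. exp (- ind a))"
    by (rule integrable_measure_pmf_bounded[where B=1]) (simp add: ind_def)
  have "measure_pmf.prob (Pi_pmf {..<n} dflt (\<lambda>_. \<rho>)) Few
      = measure_pmf.expectation (Pi_pmf {..<n} dflt (\<lambda>_. \<rho>)) (indicator Few)"
    by simp
  also have "\<dots> \<le> measure_pmf.expectation (Pi_pmf {..<n} dflt (\<lambda>_. \<rho>)) (\<lambda>as. exp t * (\<Prod>k<n. exp (- ind (as k))))"
    by (intro integral_mono pointwise integrable_mult_right integrable_prod_Pi_pmf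
        integrable_measure_pmf_bounded[where B=1]) (auto simp: ind_def)
  also have "\<dots> = exp t * (1 - q) ^ n"
    using int by (subst integral_mult_right_zero, subst expectation_prod_Pi_pmf)
      (simp_all add: ind_def expectation_exp_neg_indicator q_def)
  also have "\<dots> \<le> exp t * exp (- q) ^ n"
    using q exp_ge_add_one_self[of "- q"] by (intro mult_left_mono power_mono) auto
  also have "\<dots> = exp (t - real n * q)"
    by (simp add: exp_of_nat_mult[symmetric] exp_diff exp_minus field_simps)
  finally show ?thesis unfolding Few_def q_def .
qed

text \<open>Since \<open>1 - exp (-1) \<ge> 1/2\<close>, fewer than \<open>n P(S) / (4 \<iota>)\<close> hits has probability at most
  \<open>exp (n P(S) / 4 - n P(S) / 2) \<le> exp (- \<iota>)\<close> once \<open>4 \<iota> < n P(S)\<close>; otherwise the event is empty.\<close>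
lemma prob_Pi_pmf_few_hits_le:
  fixes \<rho> :: "'a pmf" and \<iota> :: real
  assumes "1 \<le> \<iota>"
  shows "measure_pmf.prob (Pi_pmf {..<n} dflt (\<lambda>_. \<rho>))
      {as. 4 * \<iota> * real (max (card {k \<in> {..<n}. as k \<in> S}) 1) < real n * measure_pmf.prob \<rho> S}
    \<le> exp (- \<iota>)"
proof (cases "4 * \<iota> < real n * measure_pmf.prob \<rho> S")
  case False
  have "4 * \<iota> \<le> 4 * \<iota> * real (max (card {k \<in> {..<n}. as k \<in> S}) 1)" for as :: "nat \<Rightarrow> 'a"
    using assms by (intro mult_le_cancel_left1[THEN iffD2]) auto
  hence "{as. 4 * \<iota> * real (max (card {k \<in> {..<n}. as k \<in> S}) 1) < real n * measure_pmf.prob \<rho> S} = {}"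
    using False by (auto simp: not_less intro: order_trans)
  thus ?thesis by simp
next
  case True
  define d where "d = measure_pmf.prob \<rho> S"
  define t where "t = real n * d / (4 * \<iota>)"
  have d: "0 \<le> d" "4 * \<iota> < real n * d" using True by (simp_all add: d_def)
  have few: "{as. 4 * \<iota> * real (max (card {k \<in> {..<n}. as k \<in> S}) 1) < real n * d}
      \<subseteq> {as. real (card {k \<in> {..<n}. as k \<in> S}) < t}"
  proof safe
    fix as :: "nat \<Rightarrow> 'a"
    assume "4 * \<iota> * real (max (card {k \<in> {..<n}. as k \<in> S}) 1) < real n * d"
    moreover have "4 * \<iota> * real (card {k \<in> {..<n}. as k \<in> S})
        \<le> 4 * \<iota> * real (max (card {k \<in> {..<n}. as k \<in> S}) 1)"
      using assms by (intro mult_left_mono) auto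
    ultimately have "real (card {k \<in> {..<n}. as k \<in> S}) * (4 * \<iota>) < real n * d" by (simp add: mult.commute)
    thus "real (card {k \<in> {..<n}. as k \<in> S}) < t" unfolding t_def using assms by (simp add: pos_less_divide_eq)
  qed
  have "measure_pmf.prob (Pi_pmf {..<n} dflt (\<lambda>_. \<rho>))
      {as. 4 * \<iota> * real (max (card {k \<in> {..<n}. as k \<in> S}) 1) < real n * d}
    \<le> measure_pmf.prob (Pi_pmf {..<n} dflt (\<lambda>_. \<rho>)) {as. real (card {k \<in> {..<n}. as k \<in> S}) < t}"
    using few by (intro measure_pmf.finite_measure_mono) auto
  also have "\<dots> \<le> exp (t - real n * ((1 - exp (-1)) * d))"
    unfolding d_def by (rule prob_Pi_pmf_hits_less_le)
  also have "\<dots> \<le> exp (- \<iota>)"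
  proof -
    define X where "X = real n * d"
    define Y where "Y = real n * ((1 - exp (-1)) * d)"
    have "1/2 \<le> 1 - exp (-1::real)" using exp_ge_add_one_self[of 1] by (simp add: exp_minus field_simps)
    hence "(1/2) * (real n * d) \<le> (1 - exp (-1)) * (real n * d)" using d by (intro mult_right_mono) auto
    hence "X / 2 \<le> Y" unfolding X_def Y_def by (simp add: mult_ac)
    moreover have "t \<le> X / 4" unfolding t_def X_def using assms d by (intro divide_left_mono) auto
    ultimately have "t - Y \<le> - \<iota>" using d unfolding X_def[symmetric] by linarith
    thus ?thesis unfolding Y_def by simp
  qed
  finally show ?thesis unfolding d_def .
qed

context
  fixes m n :: nat and R :: "'f::finite \<Rightarrow> nat \<Rightarrow> real measure"
  assumes rewards: "bounded_rewards m R"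
begin

abbreviation cond_data :: "(nat \<Rightarrow> nat \<Rightarrow> 'f set) \<Rightarrow> (nat \<Rightarrow> (nat \<Rightarrow> 'f set) \<times> ('f \<Rightarrow> real)) measure" where
  "cond_data as \<equiv> PiM {..<n} (\<lambda>k. sample_kernel m R (as k))"

lemma prob_space_cond_data: "prob_space (cond_data as)"
  by (intro prob_space_PiM prob_space_sample_kernel[OF rewards])

lemma sets_cond_data: "sets (cond_data as) = sets (PiM {..<n} (\<lambda>_. sample_space))"
  by (intro sets_PiM_cong sets_sample_kernel refl)

lemma space_cond_data: "space (cond_data as) = space (PiM {..<n} (\<lambda>_. sample_space))"
  by (rule sets_eq_imp_space_eq[OF sets_cond_data])

lemma measurable_cond_data:
  "cond_data \<in> measurable (measure_pmf P) (subprob_algebra (PiM {..<n} (\<lambda>_. sample_space)))"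
  using prob_space_cond_data sets_cond_data
  by (auto simp: space_subprob_algebra prob_space_imp_subprob_space)

lemma data_meas_eq_bind: "data_meas m n R \<rho> = measure_pmf (Pi_pmf {..<n} undefined (\<lambda>_. \<rho>)) \<bind> cond_data"
proof -
  interpret product_prob_space "\<lambda>_. sample_meas m R \<rho>" "{..<n}"
    by (intro product_prob_spaceI prob_space_sample_meas[OF rewards])
  have "measure_pmf (Pi_pmf {..<n} undefined (\<lambda>_. \<rho>)) \<bind> cond_data = PiM {..<n} (\<lambda>_. sample_meas m R \<rho>)"
  proof (rule PiM_eqI)
    show "sets (measure_pmf (Pi_pmf {..<n} undefined (\<lambda>_. \<rho>)) \<bind> cond_data)
        = sets (PiM {..<n} (\<lambda>_. sample_meas m R \<rho>))"
      by (subst sets_bind[where N="PiM {..<n} (\<lambda>_. sample_space)"])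
         (auto simp: sets_cond_data sets_sample_meas[OF rewards] intro!: sets_PiM_cong)
    fix X assume "\<And>k. k \<in> {..<n} \<Longrightarrow> X k \<in> sets (sample_meas m R \<rho>)"
    hence X: "X k \<in> sets sample_space" if "k < n" for k
      using that sets_sample_meas[OF rewards] by simp
    have "emeasure (measure_pmf (Pi_pmf {..<n} undefined (\<lambda>_. \<rho>)) \<bind> cond_data) (Pi\<^sub>E {..<n} X)
        = (\<integral>\<^sup>+as. emeasure (cond_data as) (Pi\<^sub>E {..<n} X) \<partial>Pi_pmf {..<n} undefined (\<lambda>_. \<rho>))"
      by (rule emeasure_bind[OF _ measurable_cond_data]) (auto intro!: sets_PiM_I_finite X)
    also have "\<dots> = (\<integral>\<^sup>+as. (\<Prod>k\<in>{..<n}. emeasure (sample_kernel m R (as k)) (X k))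
        \<partial>Pi_pmf {..<n} undefined (\<lambda>_. \<rho>))"
    proof (intro nn_integral_cong)
      fix as :: "nat \<Rightarrow> nat \<Rightarrow> 'f set"
      interpret kernels: product_prob_space "\<lambda>k. sample_kernel m R (as k)" "{..<n}"
        by (intro product_prob_spaceI prob_space_sample_kernel[OF rewards])
      show "emeasure (cond_data as) (Pi\<^sub>E {..<n} X) = (\<Prod>k\<in>{..<n}. emeasure (sample_kernel m R (as k)) (X k))"
        by (rule kernels.emeasure_PiM) (auto simp: sets_sample_kernel X)
    qed
    also have "\<dots> = (\<Prod>k\<in>{..<n}. \<integral>\<^sup>+a. emeasure (sample_kernel m R a) (X k) \<partial>\<rho>)"
      by (rule nn_integral_prod_Pi_pmf) simp
    also have "\<dots> = (\<Prod>k\<in>{..<n}. emeasure (sample_meas m R \<rho>) (X k))"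
      unfolding sample_meas_eq_bind
      by (intro prod.cong refl emeasure_bind[symmetric, OF _ measurable_sample_kernel[OF rewards]])
         (auto intro: X)
    finally show "emeasure (measure_pmf (Pi_pmf {..<n} undefined (\<lambda>_. \<rho>)) \<bind> cond_data) (Pi\<^sub>E {..<n} X)
        = (\<Prod>k\<in>{..<n}. emeasure (sample_meas m R \<rho>) (X k))" .
  qed simp
  thus ?thesis unfolding data_meas_def by simp
qed

lemma AE_cond_data_actions: "AE D in cond_data as. \<forall>k\<in>{..<n}. fst (D k) = as k"
  by (intro AE_finite_allI AE_PiM_component[where P="\<lambda>x. fst x = as _"]
      prob_space_sample_kernel[OF rewards] AE_sample_kernel_fst[OF rewards]) simp_all

lemma indep_vars_cond_data:
  assumes "1 \<le> n"
  shows "prob_space.indep_vars (cond_data as) (\<lambda>_. sample_space) (\<lambda>k D. D k) {..<n}"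
proof -
  interpret prob_space "cond_data as" by (rule prob_space_cond_data)
  have marginal: "distr (cond_data as) sample_space (\<lambda>D. D k) = sample_kernel m R (as k)" if "k < n" for k
  proof -
    have "distr (cond_data as) sample_space (\<lambda>D. D k) = distr (cond_data as) (sample_kernel m R (as k)) (\<lambda>D. D k)"
      by (intro distr_cong refl) (simp add: sets_sample_kernel)
    also have "\<dots> = sample_kernel m R (as k)"
      using that by (intro distr_PiM_component prob_space_sample_kernel[OF rewards]) simp
    finally show ?thesis .
  qed
  have "distr (cond_data as) (PiM {..<n} (\<lambda>_. sample_space)) (\<lambda>x. restrict x {..<n}) = cond_data as"
    by (subst distr_cong[of _ _ _ _ _ "\<lambda>x. x"]) (auto simp: sets_cond_data space_PiM distr_id2)
  also have "\<dots> = PiM {..<n} (\<lambda>k. distr (cond_data as) sample_space (\<lambda>D. D k))"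
    by (intro PiM_cong refl) (simp add: marginal)
  finally show ?thesis
    using assms
    by (subst indep_vars_iff_distr_eq_PiM')
       (auto simp: lessThan_empty_iff measurable_cong_sets[OF refl sets_sample_kernel]
        intro: measurable_component_singleton[of _ _ "\<lambda>k. sample_kernel m R (as k)", simplified])
qed

lemma prob_sum_rewards_deviation_le:
  fixes \<iota> :: real
  assumes "1 \<le> n" "1 \<le> l" "0 \<le> \<iota>" "K = {k \<in> {..<n}. nf m f (as k) = l}" "K \<noteq> {}"
  shows "measure (cond_data as) {D \<in> space (cond_data as).
      sqrt (\<iota> * card K) \<le> \<bar>(\<Sum>k\<in>K. snd (D k) f) - card K * mean_rew R f l\<bar>} \<le> 2 * exp (- \<iota> / 2)"
proof -
  interpret P: prob_space "cond_data as" by (rule prob_space_cond_data)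
  define X :: "nat \<Rightarrow> (nat \<Rightarrow> (nat \<Rightarrow> 'f set) \<times> ('f \<Rightarrow> real)) \<Rightarrow> real" where "X = (\<lambda>k D. snd (D k) f)"
  have K: "finite K" "K \<subseteq> {..<n}" "\<And>k. k \<in> K \<Longrightarrow> nf m f (as k) = l" using assms(4) by auto
  interpret H: Hoeffding_ineq "cond_data as" K X "\<lambda>_. -1" "\<lambda>_. 1" "\<Sum>k\<in>K. P.expectation (X k)"
  proof unfold_locales
    show "finite K" by (rule K(1))
    have "P.indep_vars (\<lambda>_. borel) (\<lambda>k D. snd (D k) f) {..<n}"
      by (rule P.indep_vars_compose2[OF indep_vars_cond_data[OF assms(1)], where Y="\<lambda>k x. snd x f"])
         (unfold sample_space_def, measurable)
    thus "P.indep_vars (\<lambda>_. borel) X K" unfolding X_def by (rule P.indep_vars_subset[OF _ K(2)])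
    fix k assume "k \<in> K"
    thus "AE x in cond_data as. X k x \<in> {-1..1}" unfolding X_def using K assms(2)
      by (intro AE_PiM_component[where P="\<lambda>x. snd x f \<in> {-1..1}"] prob_space_sample_kernel[OF rewards]
          AE_sample_kernel_reward_bounded[OF rewards]) auto
  qed simp
  have "P.expectation (X k) = mean_rew R f l" if "k \<in> K" for k
  proof -
    have "P.expectation (X k) = integral\<^sup>L (distr (cond_data as) (sample_kernel m R (as k)) (\<lambda>D. D k)) (\<lambda>x. snd x f)"
      unfolding X_def using that K(2)
      by (intro integral_distr[symmetric]) (auto simp: measurable_cong_sets[OF sets_sample_kernel refl]
          sample_space_def)
    also have "\<dots> = mean_rew R f l"
      using that K assms(2)
      by (subst distr_PiM_component[OF prob_space_sample_kernel[OF rewards]])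
         (auto simp: integral_sample_kernel_reward[OF rewards])
    finally show ?thesis .
  qed
  hence mean: "(\<Sum>k\<in>K. P.expectation (X k)) = card K * mean_rew R f l" by simp
  have "card K > 0" using K(1) assms(5) by (simp add: card_gt_0_iff)
  hence "-2 * (sqrt (\<iota> * card K))\<^sup>2 / (\<Sum>k\<in>K. (1 - (-1::real))\<^sup>2) = - \<iota> / 2"
    using assms(3) by (simp add: field_simps)
  thus ?thesis
    using H.Hoeffding_ineq_abs_ge[of "sqrt (\<iota> * card K)", unfolded mean] \<open>card K > 0\<close> assms(3)
    unfolding X_def by simp
qed

lemma emeasure_est_fail_event_le:
  assumes "1 \<le> n" "1 \<le> l" "l \<le> m" "1 \<le> \<iota>"
  shows "emeasure (cond_data as) (est_fail_event m n \<iota> R f l) \<le> ennreal (2 * exp (- \<iota> / 2))"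
proof -
  interpret prob_space "cond_data as" by (rule prob_space_cond_data)
  define K where "K = {k \<in> {..<n}. nf m f (as k) = l}"
  show ?thesis
  proof (cases "K = {}")
    case True
    have "AE D in cond_data as. D \<in> est_fail_event m n \<iota> R f l \<longrightarrow> D \<in> {}"
      using AE_cond_data_actions
      by (rule eventually_mono) (use not_in_est_fail_event_if_no_match[OF rewards assms(2-4)] True K_def in blast)
    hence "emeasure (cond_data as) (est_fail_event m n \<iota> R f l) \<le> emeasure (cond_data as) {}"
      by (rule emeasure_mono_AE) simp
    thus ?thesis by simp
  next
    case False
    define H where "H = {D \<in> space (cond_data as).
      sqrt (\<iota> * card K) \<le> \<bar>(\<Sum>k\<in>K. snd (D k) f) - card K * mean_rew R f l\<bar>}"
    have "AE D in cond_data as. D \<in> est_fail_event m n \<iota> R f l \<longrightarrow> D \<in> H"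
      using AE_cond_data_actions
    proof (rule eventually_mono, intro impI)
      fix D assume "\<forall>k\<in>{..<n}. fst (D k) = as k" "D \<in> est_fail_event m n \<iota> R f l"
      thus "D \<in> H"
        using sum_deviation_if_in_est_fail_event[OF _ _ K_def False] assms(4)
        unfolding H_def space_cond_data by (auto simp: est_fail_event_def)
    qed
    moreover have "H \<in> events" unfolding H_def sets_cond_data space_cond_data K_def by measurable
    ultimately have "emeasure (cond_data as) (est_fail_event m n \<iota> R f l) \<le> emeasure (cond_data as) H"
      by (rule emeasure_mono_AE)
    also have "\<dots> \<le> ennreal (2 * exp (- \<iota> / 2))"
      using prob_sum_rewards_deviation_le[OF assms(1,2) _ K_def False] assms(4)
      unfolding H_def by (simp add: emeasure_eq_measure)
    finally show ?thesis .
  qed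
qed

lemma emeasure_count_fail_event_le:
  "emeasure (cond_data as) (count_fail_event m n \<iota> \<rho> f l)
    \<le> indicator {as. 4 * \<iota> * real (max (card {k \<in> {..<n}. as k \<in> {a. nf m f a = l}}) 1)
        < real n * measure_pmf.prob \<rho> {a. nf m f a = l}} as"
proof -
  interpret prob_space "cond_data as" by (rule prob_space_cond_data)
  let ?few = "4 * \<iota> * real (max (card {k \<in> {..<n}. nf m f (as k) = l}) 1) < real n * dens m \<rho> f l"
  have "AE D in cond_data as. D \<in> count_fail_event m n \<iota> \<rho> f l \<longrightarrow> ?few"
  proof (rule eventually_mono[OF AE_cond_data_actions], intro impI)
    fix D assume "\<forall>k\<in>{..<n}. fst (D k) = as k" "D \<in> count_fail_event m n \<iota> \<rho> f l"
    thus ?few using facility_est_eq_if_actions(1)[of n D as m f l] by (simp add: count_fail_event_def)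
  qed
  hence "emeasure (cond_data as) (count_fail_event m n \<iota> \<rho> f l) \<le> (if ?few then 1 else 0)"
  proof (cases ?few)
    case False
    have "AE D in cond_data as. D \<in> count_fail_event m n \<iota> \<rho> f l \<longrightarrow> D \<in> {}"
      using \<open>AE D in cond_data as. _ \<longrightarrow> ?few\<close> by (rule eventually_mono) (use False in blast)
    hence "emeasure (cond_data as) (count_fail_event m n \<iota> \<rho> f l) \<le> emeasure (cond_data as) {}"
      by (rule emeasure_mono_AE) simp
    thus ?thesis by simp
  qed (simp add: measure_le_1)
  thus ?thesis by (auto simp: dens_def indicator_def split: if_splits)
qed

lemma prob_space_data_meas: "prob_space (data_meas m n R \<rho>)"
  unfolding data_meas_def by (intro prob_space_PiM prob_space_sample_meas[OF rewards])

lemma sets_data_meas: "sets (data_meas m n R \<rho>) = sets (PiM {..<n} (\<lambda>_. sample_space))"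
  unfolding data_meas_def by (intro sets_PiM_cong refl sets_sample_meas[OF rewards])

lemma emeasure_data_meas_le:
  assumes "B \<in> sets (PiM {..<n} (\<lambda>_. sample_space))" "\<And>as. emeasure (cond_data as) B \<le> g as"
  shows "emeasure (data_meas m n R \<rho>) B \<le> (\<integral>\<^sup>+as. g as \<partial>Pi_pmf {..<n} undefined (\<lambda>_. \<rho>))"
  unfolding data_meas_eq_bind
  by (subst emeasure_bind[OF _ measurable_cond_data]) (auto intro!: nn_integral_mono assms simp: assms(1))

lemma prob_est_fail_event_le:
  assumes "1 \<le> n" "1 \<le> l" "l \<le> m" "1 \<le> \<iota>"
  shows "measure (data_meas m n R \<rho>) (est_fail_event m n \<iota> R f l) \<le> 2 * exp (- \<iota> / 2)"
proof -
  interpret prob_space "data_meas m n R \<rho>" by (rule prob_space_data_meas)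
  have "emeasure (data_meas m n R \<rho>) (est_fail_event m n \<iota> R f l) \<le> ennreal (2 * exp (- \<iota> / 2))"
    using emeasure_data_meas_le[OF sets_est_fail_event emeasure_est_fail_event_le[OF assms]] by simp
  thus ?thesis by (simp add: emeasure_eq_measure)
qed

lemma prob_count_fail_event_le:
  assumes "1 \<le> \<iota>"
  shows "measure (data_meas m n R \<rho>) (count_fail_event m n \<iota> \<rho> f l) \<le> exp (- \<iota>)"
proof -
  interpret prob_space "data_meas m n R \<rho>" by (rule prob_space_data_meas)
  have "emeasure (data_meas m n R \<rho>) (count_fail_event m n \<iota> \<rho> f l)
      \<le> emeasure (Pi_pmf {..<n} undefined (\<lambda>_. \<rho>)) {as. 4 * \<iota> * real (max (card {k \<in> {..<n}.
          as k \<in> {a. nf m f a = l}}) 1) < real n * measure_pmf.prob \<rho> {a. nf m f a = l}}"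
    using emeasure_data_meas_le[OF sets_count_fail_event emeasure_count_fail_event_le] by simp
  thus ?thesis
    using prob_Pi_pmf_few_hits_le[OF assms, of n undefined \<rho> "{a. nf m f a = l}"]
    by (simp add: emeasure_eq_measure measure_pmf.emeasure_eq_measure)
qed

lemma good_data_event:
  assumes "1 \<le> n" "1 \<le> \<iota>"
  shows "\<exists>E \<in> sets (data_meas m n R \<rho>).
    1 - real m * real CARD('f) * (2 * exp (- \<iota> / 2) + exp (- \<iota>)) \<le> measure (data_meas m n R \<rho>) E \<and>
    (\<forall>D\<in>E. good_data m n \<iota> R \<rho> D)"
proof -
  define M where "M = data_meas m n R \<rho>"
  define I where "I = (UNIV :: 'f set) \<times> {1..m}"
  define fail where "fail = (\<lambda>(f, l). est_fail_event m n \<iota> R f l \<union> count_fail_event m n \<iota> \<rho> f l)"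
  define E where "E = space M - (\<Union>p\<in>I. fail p)"
  interpret prob_space M unfolding M_def by (rule prob_space_data_meas)
  have events: "fail p \<in> events" for p
  proof -
    obtain f l where "p = (f, l)" by (cases p)
    thus ?thesis unfolding M_def sets_data_meas fail_def
      by (simp add: sets.Un sets_est_fail_event sets_count_fail_event)
  qed
  have "prob (fail p) \<le> 2 * exp (- \<iota> / 2) + exp (- \<iota>)" if "p \<in> I" for p
  proof -
    obtain f l where p: "p = (f, l)" "1 \<le> l" "l \<le> m" using \<open>p \<in> I\<close> unfolding I_def by auto
    have "est_fail_event m n \<iota> R f l \<in> events" "count_fail_event m n \<iota> \<rho> f l \<in> events"
      unfolding M_def sets_data_meas by (rule sets_est_fail_event sets_count_fail_event)+
    from measure_Un_le[OF this] show ?thesis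
      using prob_est_fail_event_le[OF assms(1) p(2,3) assms(2), of \<rho> f]
        prob_count_fail_event_le[OF assms(2), of \<rho> f l]
      unfolding fail_def p M_def by simp
  qed
  hence prob_E: "1 - real (card I) * (2 * exp (- \<iota> / 2) + exp (- \<iota>)) \<le> prob E"
    unfolding E_def using events by (intro prob_compl_UN_ge) (auto simp: I_def)
  have card_I: "real (card I) = real m * real CARD('f)" by (simp add: I_def card_cartesian_product)
  have "E \<in> events"
    unfolding E_def I_def by (intro sets.compl_sets sets.finite_UN events) auto
  show ?thesis unfolding good_data_def
  proof (intro bexI[of _ E] conjI ballI allI impI)
    show "E \<in> sets (data_meas m n R \<rho>)" using \<open>E \<in> events\<close> by (simp add: M_def)
    show "1 - real m * real CARD('f) * (2 * exp (- \<iota> / 2) + exp (- \<iota>)) \<le> measure (data_meas m n R \<rho>) E"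
      using prob_E unfolding card_I M_def .
    fix D f l assume "D \<in> E" "1 \<le> l" "l \<le> m"
    hence "D \<in> space (PiM {..<n} (\<lambda>_. sample_space))" "D \<notin> fail (f, l)"
      unfolding E_def I_def M_def sets_eq_imp_space_eq[OF sets_data_meas] by auto
    thus "\<bar>facility_est m n D f l - mean_rew R f l\<bar> \<le> facility_bonus m n \<iota> D f l"
      and "0 < dens m \<rho> f l \<Longrightarrow> real n * dens m \<rho> f l \<le> 4 * \<iota> * real (max (Ncnt m n D f l) 1)"
      unfolding fail_def est_fail_event_def count_fail_event_def by auto
  qed
qed

end

lemma confidence_radius_bounds:
  fixes \<delta> \<iota> F :: real
  assumes "1 \<le> m" "1 \<le> F" "0 < \<delta>" "\<delta> < 1" "\<iota> = 2 * ln (4 * (real m + 1) * F / \<delta>)"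
  shows "1 \<le> \<iota>" and "real m * F * (2 * exp (- \<iota> / 2) + exp (- \<iota>)) \<le> \<delta>"
proof -
  define x where "x = 4 * (real m + 1) * F / \<delta>"
  define y where "y = \<delta> / (4 * (real m + 1))"
  have "2 \<le> (real m + 1) * F"
    using assms(1,2) mult_mono[of 2 "real m + 1" 1 F] by simp
  hence "8 * \<delta> \<le> 4 * ((real m + 1) * F)" using assms(4) by linarith
  hence "8 * \<delta> \<le> 4 * (real m + 1) * F" by (simp only: mult.assoc)
  hence x: "8 \<le> x" unfolding x_def using assms(3) by (subst pos_le_divide_eq) auto
  have \<iota>: "\<iota> = 2 * ln x" unfolding assms(5) x_def ..
  have "exp 1 \<le> x" using exp_le x by simp
  hence "1 \<le> ln x" using x by (subst ln_ge_iff) auto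
  thus "1 \<le> \<iota>" unfolding \<iota> by simp
  have "exp (- \<iota> / 2) = y / F"
    using x unfolding \<iota> by (simp add: exp_minus inverse_eq_divide x_def y_def divide_divide_eq_left)
  moreover have "exp (- \<iota>) \<le> exp (- \<iota> / 2)" using \<open>1 \<le> \<iota>\<close> by simp
  ultimately have "real m * F * (2 * exp (- \<iota> / 2) + exp (- \<iota>)) \<le> real m * F * (3 * (y / F))"
    using assms(2) by (intro mult_left_mono) auto
  also have "\<dots> = 3 * real m * y" using assms(2) by simp
  also have "\<dots> \<le> 4 * (real m + 1) * y" using assms(3) by (intro mult_right_mono) (auto simp: y_def)
  also have "\<dots> = \<delta>" by (simp add: y_def)
  finally show "real m * F * (2 * exp (- \<iota> / 2) + exp (- \<iota>)) \<le> \<delta>" .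
qed

theorem theorem3:
  fixes m n :: nat
    and A :: "nat \<Rightarrow> ('f::finite) set set"
    and R :: "'f \<Rightarrow> nat \<Rightarrow> real measure"
    and \<rho> :: "(nat \<Rightarrow> 'f set) pmf"
    and \<pi>s :: "nat \<Rightarrow> 'f set pmf"
    and \<delta> \<iota> :: real
  assumes "m \<ge> 1" and "n \<ge> 1"
    and "\<forall>i<m. finite (A i) \<and> A i \<noteq> {}"
    and "set_pmf \<rho> \<subseteq> PiE {..<m} A"
    and "\<forall>f l. 1 \<le> l \<and> l \<le> m \<longrightarrow> prob_space (R f l) \<and> sets (R f l) = sets borel
            \<and> (AE x in R f l. -1 \<le> x \<and> x \<le> 1)"
    and "0 < \<delta>" and "\<delta> < 1"
    and "\<iota> = 2 * ln (4 * (real m + 1) * real CARD('f) / \<delta>)"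
    and "is_NE m A R \<pi>s"
    and "one_unit_dev m A \<rho> \<pi>s"
  shows "\<exists>E \<in> sets (data_meas m n R \<rho>). measure (data_meas m n R \<rho>) E \<ge> 1 - \<delta> \<and>
           (\<forall>D\<in>E. \<forall>\<pi>out. is_output m A n \<iota> D \<pi>out \<longrightarrow>
              Gap m A R \<pi>out \<le> 8 * sqrt (real m + 1) * C_facility m A \<rho> \<pi>s * \<iota> * real CARD('f) / sqrt (real n))"
proof -
  have rewards: "bounded_rewards m R" using assms(5) unfolding bounded_rewards_def .
  have "1 \<le> real CARD('f)" by (simp add: Suc_le_eq)
  note radius = confidence_radius_bounds[OF assms(1) this assms(6,7,8)]
  obtain E where "E \<in> sets (data_meas m n R \<rho>)" and good: "\<forall>D\<in>E. good_data m n \<iota> R \<rho> D"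
    and "1 - real m * real CARD('f) * (2 * exp (- \<iota> / 2) + exp (- \<iota>)) \<le> measure (data_meas m n R \<rho>) E"
    using good_data_event[OF rewards assms(2) radius(1), of \<rho>] by blast
  moreover from this(3) have "1 - \<delta> \<le> measure (data_meas m n R \<rho>) E" using radius(2) by linarith
  moreover have "\<forall>i<m. A i \<noteq> {}" using assms(3) by blast
  ultimately show ?thesis
    using Gap_le_if_good_data[OF assms(1,2) _ rewards radius(1) assms(9,10)] by blast
qed

end
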